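(* Let $S,P,Q$ be pairwise disjoint finite sets and $\mathcal{M}_{SP},\mathcal{M}_P,\mathcal{M}_{PQ}$ matroids on $S\uplus P$, $P$, $P\uplus Q$ respectively. 1. If $\mathcal{M}^1_{SP},\mathcal{M}^1_{PQ}$ are matroids on $S\uplus P$, $P\uplus Q$ with $\mathcal{M}^1_{SP}\ge\mathcal{M}_{SP}$ and $\mathcal{M}^1_{PQ}\ge\mathcal{M}_{PQ}$, then $\mathcal{M}^1_{SP}\leftrightarrow\mathcal{M}^1_{PQ}\ge\mathcal{M}_{SP}\leftrightarrow\mathcal{M}_{PQ}$. 2. $\mathcal{M}_{SP}\circ S\ge\mathcal{M}_{SP}\leftrightarrow\mathcal{M}_P\ge\mathcal{M}_{SP}\times S$. 3. If $\mathcal{M}_P=\mathcal{M}^*_{SP}\circ P$, then $\mathcal{M}_{SP}\circ S=\mathcal{M}_{SP}\leftrightarrow\mathcal{M}_P$. 4. If $\mathcal{M}_P=\mathcal{M}^*_{SP}\times P$, then $\mathcal{M}_{SP}\times S=\mathcal{M}_{SP}\leftrightarrow\mathcal{M}_P$.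
   Context: Matroids are on finite sets, given by their bases; $\mathcal{M}^*$ is the dual. $\mathcal{M}\circ T$ is the restriction (independent sets inside $T$), $\mathcal{M}\times T$ the contraction (matroid on $T$ whose bases are the minimal sets $b\cap T$, $b$ a base). $\mathbf{0}_X$ has only base $\emptyset$; $\oplus$ direct sum. For matroids on the same set, $\mathcal{M}_1\vee\mathcal{M}_2$ has bases the maximal sets $b_1\cup b_2$. $\mathcal{M}_{SP}\leftrightarrow\mathcal{M}_{PQ}:=((\mathcal{M}_{SP}\oplus\mathbf{0}_Q)\vee(\mathcal{M}_{PQ}\oplus\mathbf{0}_S))\times(S\uplus Q)$, and $\mathcal{M}_{SP}\leftrightarrow\mathcal{M}_P:=(\mathcal{M}_{SP}\vee(\mathcal{M}_P\oplus\mathbf{0}_S))\times S$. For matroids $\mathcal{M}^1,\mathcal{M}^2$ on the same set $E$, $\mathcal{M}^1\ge\mathcal{M}^2$ means: for every $T\subseteq E$, every base of $\mathcal{M}^1\circ T$ contains a base of $\mathcal{M}^2\circ T$ and every base of $\mathcal{M}^2\circ T$ is contained in a base of $\mathcal{M}^1\circ T$. *)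

theory Defs
  imports Main
begin

type_synonym 'a matroid = "'a set \<times> 'a set set"

definition ground :: "'a matroid \<Rightarrow> 'a set" where "ground M = fst M"
definition bases :: "'a matroid \<Rightarrow> 'a set set" where "bases M = snd M"

definition is_matroid :: "'a matroid \<Rightarrow> bool" where
  "is_matroid M \<longleftrightarrow> finite (ground M) \<and> bases M \<noteq> {} \<and>
     (\<forall>b\<in>bases M. b \<subseteq> ground M) \<and>
     (\<forall>b1\<in>bases M. \<forall>b2\<in>bases M. \<forall>x\<in>b1 - b2.
        \<exists>y\<in>b2 - b1. insert y (b1 - {x}) \<in> bases M)"

definition maximals :: "'a set set \<Rightarrow> 'a set set" where
  "maximals F = {X \<in> F. \<not> (\<exists>Y\<in>F. X \<subset> Y)}"
definition minimals :: "'a set set \<Rightarrow> 'a set set" where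
  "minimals F = {X \<in> F. \<not> (\<exists>Y\<in>F. Y \<subset> X)}"

definition dual :: "'a matroid \<Rightarrow> 'a matroid" where
  "dual M = (ground M, (\<lambda>b. ground M - b) ` bases M)"

text \<open>Restriction \<open>M \<circ> T\<close>: independent sets (subsets of bases) inside T.\<close>
definition restr :: "'a matroid \<Rightarrow> 'a set \<Rightarrow> 'a matroid" where
  "restr M T = (T, maximals {I. I \<subseteq> T \<and> (\<exists>b\<in>bases M. I \<subseteq> b)})"

text \<open>Contraction \<open>M \<times> T\<close>: bases are the minimal sets \<open>b \<inter> T\<close>.\<close>
definition contr :: "'a matroid \<Rightarrow> 'a set \<Rightarrow> 'a matroid" where
  "contr M T = (T, minimals ((\<lambda>b. b \<inter> T) ` bases M))"

definition zero_m :: "'a set \<Rightarrow> 'a matroid" where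
  "zero_m X = (X, {{}})"

definition dsum :: "'a matroid \<Rightarrow> 'a matroid \<Rightarrow> 'a matroid" where
  "dsum M1 M2 = (ground M1 \<union> ground M2,
     {b1 \<union> b2 | b1 b2. b1 \<in> bases M1 \<and> b2 \<in> bases M2})"

definition munion :: "'a matroid \<Rightarrow> 'a matroid \<Rightarrow> 'a matroid" where
  "munion M1 M2 = (ground M1 \<union> ground M2,
     maximals {b1 \<union> b2 | b1 b2. b1 \<in> bases M1 \<and> b2 \<in> bases M2})"

text \<open>\<open>M_SP \<leftrightarrow> M_PQ\<close> (S, P, Q given explicitly).\<close>
definition link2 :: "'a matroid \<Rightarrow> 'a set \<Rightarrow> 'a set \<Rightarrow> 'a set \<Rightarrow> 'a matroid \<Rightarrow> 'a matroid" where
  "link2 MSP S P Q MPQ =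
     contr (munion (dsum MSP (zero_m Q)) (dsum MPQ (zero_m S))) (S \<union> Q)"

text \<open>\<open>M_SP \<leftrightarrow> M_P\<close>.\<close>
definition link1 :: "'a matroid \<Rightarrow> 'a set \<Rightarrow> 'a matroid \<Rightarrow> 'a matroid" where
  "link1 MSP S MP = contr (munion MSP (dsum MP (zero_m S))) S"

definition mgeq :: "'a matroid \<Rightarrow> 'a matroid \<Rightarrow> bool" where
  "mgeq M1 M2 \<longleftrightarrow> ground M1 = ground M2 \<and>
     (\<forall>T\<subseteq>ground M1.
        (\<forall>b1\<in>bases (restr M1 T). \<exists>b2\<in>bases (restr M2 T). b2 \<subseteq> b1) \<and>
        (\<forall>b2\<in>bases (restr M2 T). \<exists>b1\<in>bases (restr M1 T). b2 \<subseteq> b1))"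

end

theory Submission
  imports Defs
begin

(* Every matroid is determined by its rank function, and M1 \<ge> M2 holds exactly when
   r2 Y - r2 X \<le> r1 Y - r1 X for all X \<subseteq> Y, i.e. when M2 is a quotient of M1.  All the
   operations in a linkage have explicit rank functions: restriction keeps r, contraction by Z
   gives r (X \<union> Z) - r Z, the dual gives |X| + r (E - X) - r E, adding loops gives r (X \<inter> E), and
   the union of two matroids has rank min_{A \<subseteq> X} (a A + b A + |X - A|) (Nash-Williams),
   which follows from Edmonds' intersection theorem.  Each operation preserves the quotient
   relation; for the union this is read off the min-formula by uncrossing the two minimisers
   with submodularity.  This gives (1) and, since M_P \<oplus> 0_S has no independent set inside S,
   also (2).  For (3) and (4) the union rank of X \<union> P (X \<subseteq> S) is computed directly from
   large union-independent sets built out of bases: it is r X + |P|, resp. r (X \<union> P) - r P + |P|,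
   so contracting P leaves the rank function of M_SP \<circ> S, resp. M_SP \<times> S. *)

section \<open>Rank functions\<close>

text \<open>By monotonicity the subtraction in \<open>contr_rank\<close> never truncates, and by
  \<open>rank_fn.rank_le_card_plus_rank_compl\<close> neither does the one in \<open>dual_rank\<close>.\<close>

definition contr_rank :: "('a set \<Rightarrow> nat) \<Rightarrow> 'a set \<Rightarrow> 'a set \<Rightarrow> nat" where
  "contr_rank r Z X = r (X \<union> Z) - r Z"

definition dual_rank :: "'a set \<Rightarrow> ('a set \<Rightarrow> nat) \<Rightarrow> 'a set \<Rightarrow> nat" where
  "dual_rank E r X = card X + r (E - X) - r E"

locale rank_fn =
  fixes E :: "'a set" and r :: "'a set \<Rightarrow> nat"
  assumes finite_ground: "finite E"
    and rank_le_card: "X \<subseteq> E \<Longrightarrow> r X \<le> card X"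
    and rank_mono: "X \<subseteq> Y \<Longrightarrow> Y \<subseteq> E \<Longrightarrow> r X \<le> r Y"
    and rank_submod: "X \<subseteq> E \<Longrightarrow> Y \<subseteq> E \<Longrightarrow> r (X \<union> Y) + r (X \<inter> Y) \<le> r X + r Y"
begin

lemma rank_empty [simp]: "r {} = 0"
  using rank_le_card[of "{}"] by simp

lemma finite_subset_ground: "X \<subseteq> E \<Longrightarrow> finite X"
  using finite_ground finite_subset by blast

lemma rank_Un_le: "X \<subseteq> E \<Longrightarrow> Y \<subseteq> E \<Longrightarrow> r (X \<union> Y) \<le> r X + r Y"
  using rank_submod[of X Y] by simp

lemma rank_insert_le: "X \<subseteq> E \<Longrightarrow> x \<in> E \<Longrightarrow> r (insert x X) \<le> r X + 1"
  using rank_Un_le[of X "{x}"] rank_le_card[of "{x}"] by simp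

lemma rank_le_card_plus_rank_diff:
  assumes "X \<subseteq> Y" "Y \<subseteq> E"
  shows "r Y \<le> card X + r (Y - X)"
proof -
  have "r Y = r (X \<union> (Y - X))"
    using assms(1) by (simp add: Un_absorb1)
  also have "\<dots> \<le> r X + r (Y - X)"
    using assms by (intro rank_Un_le) auto
  moreover have "r X \<le> card X"
    using assms by (intro rank_le_card) auto
  ultimately show ?thesis
    by linarith
qed

lemma rank_fn_subset: "E' \<subseteq> E \<Longrightarrow> rank_fn E' r"
  by unfold_locales
    (use finite_ground rank_le_card rank_mono rank_submod in \<open>auto intro: finite_subset\<close>)

lemma indep_subset:
  assumes "I \<subseteq> E" "r I = card I" "J \<subseteq> I"
  shows "r J = card J"
proof -
  have "r I \<le> r J + r (I - J)"
    using rank_Un_le[of J "I - J"] assms by (simp add: Un_absorb1 subset_iff)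
  moreover have "card I = card J + card (I - J)"
    using assms finite_subset_ground by (metis card_Diff_subset card_mono finite_subset le_add_diff_inverse)
  moreover have "J \<subseteq> E" "I - J \<subseteq> E"
    using assms by auto
  ultimately show ?thesis
    using rank_le_card[of J] rank_le_card[of "I - J"] assms by linarith
qed

lemma rank_Un_spanned:
  assumes "I \<subseteq> E" "Y \<subseteq> E" "\<And>y. y \<in> Y \<Longrightarrow> r (insert y I) = r I"
  shows "r (I \<union> Y) = r I"
  using finite_subset_ground[OF assms(2)] assms(2,3)
proof (induction Y rule: finite_induct)
  case empty
  then show ?case by simp
next
  case (insert y Y)
  have "I \<union> insert y Y = (I \<union> Y) \<union> insert y I"
    by auto
  then have "r (I \<union> insert y Y) + r ((I \<union> Y) \<inter> insert y I) \<le> r (I \<union> Y) + r (insert y I)"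
    using assms(1) insert.prems(1) by (simp only:) (intro rank_submod; auto)
  moreover have "r I \<le> r ((I \<union> Y) \<inter> insert y I)"
    using assms(1) insert.prems(1) by (intro rank_mono) auto
  moreover have "r I \<le> r (I \<union> insert y Y)"
    using assms(1) insert.prems(1) by (intro rank_mono) auto
  moreover have "r (I \<union> Y) = r I" "r (insert y I) = r I"
    using insert by auto
  ultimately show ?case
    by linarith
qed

lemma extend_basis:
  assumes "X \<subseteq> E" "I \<subseteq> X" "r I = card I"
  shows "\<exists>B. I \<subseteq> B \<and> B \<subseteq> X \<and> r B = card B \<and> card B = r X"
  using assms(2,3)
proof (induction "card X - card I" arbitrary: I rule: less_induct)
  case less
  have I_E: "I \<subseteq> E"
    using assms(1) less.prems(1) by blast
  have fin_X: "finite X" and fin_I: "finite I"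
    using finite_subset_ground assms(1) I_E by auto
  show ?case
  proof (cases "\<exists>x\<in>X - I. r (insert x I) = card (insert x I)")
    case True
    then obtain x where x: "x \<in> X" "x \<notin> I" "r (insert x I) = card (insert x I)"
      by blast
    have "card (insert x I) \<le> card X"
      using x less.prems fin_X by (intro card_mono) auto
    then have "card X - card (insert x I) < card X - card I"
      using x fin_I by simp
    moreover have "insert x I \<subseteq> X"
      using x less.prems by blast
    ultimately have "\<exists>B. insert x I \<subseteq> B \<and> B \<subseteq> X \<and> r B = card B \<and> card B = r X"
      using x(3) by (rule less.hyps)
    then show ?thesis
      by auto
  next
    case False
    have "r (insert y I) = r I" if "y \<in> X" for y
    proof (cases "y \<in> I")
      case False
      have "r (insert y I) \<le> r I + 1"
        using that assms(1) I_E by (intro rank_insert_le) auto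
      moreover have "r I \<le> r (insert y I)"
        using that assms(1) I_E by (intro rank_mono) auto
      moreover have "r (insert y I) \<noteq> card I + 1"
        using \<open>\<not> (\<exists>x\<in>X - I. _)\<close> that False fin_I by auto
      ultimately show ?thesis
        using less.prems(2) by linarith
    qed (simp add: insert_absorb)
    then have "r (I \<union> X) = r I"
      by (rule rank_Un_spanned[OF I_E assms(1)])
    then show ?thesis
      using less.prems by (intro exI[of _ I]) (simp add: Un_absorb1)
  qed
qed

lemma basis_exists: "X \<subseteq> E \<Longrightarrow> \<exists>B. B \<subseteq> X \<and> r B = card B \<and> card B = r X"
  using extend_basis[of X "{}"] by auto

lemma augment:
  assumes "I \<subseteq> E" "J \<subseteq> E" "r I = card I" "r J = card J" "card I < card J"
  shows "\<exists>x\<in>J - I. r (insert x I) = card (insert x I)"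
proof -
  obtain B where B: "I \<subseteq> B" "B \<subseteq> I \<union> J" "r B = card B" "card B = r (I \<union> J)"
    using extend_basis[of "I \<union> J" I] assms by auto
  have "r J \<le> r (I \<union> J)"
    using assms by (intro rank_mono) auto
  then have "B \<noteq> I"
    using B assms by auto
  then obtain x where x: "x \<in> B" "x \<notin> I"
    using B by blast
  have "r (insert x I) = card (insert x I)"
    using indep_subset[of B "insert x I"] B x assms by auto
  then show ?thesis
    using x B by blast
qed

lemma maximal_indeps:
  assumes "T \<subseteq> E"
  shows "maximals {I. I \<subseteq> T \<and> I \<subseteq> E \<and> r I = card I} = {B. B \<subseteq> T \<and> card B = r B \<and> r B = r T}"
proof (intro set_eqI iffI)
  fix B
  assume "B \<in> maximals {I. I \<subseteq> T \<and> I \<subseteq> E \<and> r I = card I}"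
  then have B: "B \<subseteq> T" "r B = card B"
    and max: "\<And>Y. Y \<subseteq> T \<Longrightarrow> Y \<subseteq> E \<Longrightarrow> r Y = card Y \<Longrightarrow> \<not> B \<subset> Y"
    unfolding maximals_def by auto
  obtain B' where B': "B \<subseteq> B'" "B' \<subseteq> T" "r B' = card B'" "card B' = r T"
    using extend_basis[of T B] B assms by auto
  then have "B' = B"
    using max[of B'] assms by blast
  then show "B \<in> {B. B \<subseteq> T \<and> card B = r B \<and> r B = r T}"
    using B' by auto
next
  fix B
  assume B: "B \<in> {B. B \<subseteq> T \<and> card B = r B \<and> r B = r T}"
  have "\<not> B \<subset> Y" if "Y \<subseteq> T" "Y \<subseteq> E" "r Y = card Y" for Y
  proof
    assume "B \<subset> Y"
    then have "card B < card Y"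
      using that finite_subset_ground psubset_card_mono by blast
    moreover have "r Y \<le> r T"
      using that assms by (intro rank_mono)
    ultimately show False
      using B that by auto
  qed
  then show "B \<in> maximals {I. I \<subseteq> T \<and> I \<subseteq> E \<and> r I = card I}"
    using B assms unfolding maximals_def by auto
qed

lemma rank_fn_contr:
  assumes "Z \<subseteq> E"
  shows "rank_fn (E - Z) (contr_rank r Z)"
proof
  show "finite (E - Z)"
    using finite_ground by simp
next
  fix X
  assume "X \<subseteq> E - Z"
  then have "X \<subseteq> E"
    by blast
  then show "contr_rank r Z X \<le> card X"
    using rank_Un_le[of X Z] rank_le_card[of X] assms by (simp add: contr_rank_def)
next
  fix X Y
  assume "X \<subseteq> Y" "Y \<subseteq> E - Z"
  then have "r (X \<union> Z) \<le> r (Y \<union> Z)"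
    using assms by (intro rank_mono) auto
  then show "contr_rank r Z X \<le> contr_rank r Z Y"
    by (simp add: contr_rank_def)
next
  fix X Y
  assume XY: "X \<subseteq> E - Z" "Y \<subseteq> E - Z"
  have "r ((X \<union> Z) \<union> (Y \<union> Z)) + r ((X \<union> Z) \<inter> (Y \<union> Z)) \<le> r (X \<union> Z) + r (Y \<union> Z)"
    using XY assms by (intro rank_submod) auto
  moreover have "(X \<union> Z) \<union> (Y \<union> Z) = (X \<union> Y) \<union> Z" "(X \<union> Z) \<inter> (Y \<union> Z) = (X \<inter> Y) \<union> Z"
    by auto
  ultimately have "r ((X \<union> Y) \<union> Z) + r ((X \<inter> Y) \<union> Z) \<le> r (X \<union> Z) + r (Y \<union> Z)"
    by simp
  moreover have "r Z \<le> r ((X \<inter> Y) \<union> Z)" "r Z \<le> r ((X \<union> Y) \<union> Z)"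
    using XY assms by (intro rank_mono; auto)+
  ultimately show "contr_rank r Z (X \<union> Y) + contr_rank r Z (X \<inter> Y) \<le>
      contr_rank r Z X + contr_rank r Z Y"
    unfolding contr_rank_def by linarith
qed

lemma rank_le_card_plus_rank_compl: "X \<subseteq> E \<Longrightarrow> r E \<le> card X + r (E - X)"
  using rank_le_card_plus_rank_diff by blast

lemma rank_fn_dual: "rank_fn E (dual_rank E r)"
proof
  show "finite E"
    by (rule finite_ground)
next
  fix X
  assume "X \<subseteq> E"
  then show "dual_rank E r X \<le> card X"
    using rank_mono[of "E - X" E] by (auto simp: dual_rank_def)
next
  fix X Y
  assume XY: "X \<subseteq> Y" "Y \<subseteq> E"
  have "E - X - (Y - X) = E - Y"
    using XY by blast
  then have "r (E - X) \<le> card (Y - X) + r (E - Y)"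
    using rank_le_card_plus_rank_diff[of "Y - X" "E - X"] XY by auto
  moreover have "card Y = card X + card (Y - X)"
    using XY finite_subset_ground by (metis card_Diff_subset card_mono finite_subset le_add_diff_inverse)
  ultimately show "dual_rank E r X \<le> dual_rank E r Y"
    unfolding dual_rank_def by linarith
next
  fix X Y
  assume XY: "X \<subseteq> E" "Y \<subseteq> E"
  have "card (X \<union> Y) + card (X \<inter> Y) = card X + card Y"
    using card_Un_Int[of X Y] XY finite_subset_ground by simp
  moreover have "r (E - (X \<inter> Y)) + r (E - (X \<union> Y)) \<le> r (E - X) + r (E - Y)"
    using rank_submod[of "E - X" "E - Y"] by (simp add: Diff_Int Diff_Un)
  moreover have "r E \<le> card (X \<union> Y) + r (E - (X \<union> Y))" "r E \<le> card (X \<inter> Y) + r (E - (X \<inter> Y))"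
    "r E \<le> card X + r (E - X)" "r E \<le> card Y + r (E - Y)"
    using XY by (intro rank_le_card_plus_rank_compl; auto)+
  ultimately show "dual_rank E r (X \<union> Y) + dual_rank E r (X \<inter> Y) \<le> dual_rank E r X + dual_rank E r Y"
    unfolding dual_rank_def by linarith
qed

lemma rank_fn_add_loops:
  assumes "finite Q"
  shows "rank_fn (E \<union> Q) (\<lambda>X. r (X \<inter> E))"
proof
  show "finite (E \<union> Q)"
    using finite_ground assms by simp
next
  fix X
  assume "X \<subseteq> E \<union> Q"
  then have "finite X"
    using finite_ground assms finite_subset by auto
  then show "r (X \<inter> E) \<le> card X"
    using rank_le_card[of "X \<inter> E"] card_mono[of X "X \<inter> E"] by simp
next
  fix X Y
  assume "X \<subseteq> Y" "Y \<subseteq> E \<union> Q"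
  then show "r (X \<inter> E) \<le> r (Y \<inter> E)"
    by (intro rank_mono) auto
next
  fix X Y
  show "r ((X \<union> Y) \<inter> E) + r (X \<inter> Y \<inter> E) \<le> r (X \<inter> E) + r (Y \<inter> E)"
    using rank_submod[of "X \<inter> E" "Y \<inter> E"] by (simp add: Int_Un_distrib2 Int_assoc Int_left_commute)
qed

end

lemma rank_fn_zero: "finite E \<Longrightarrow> rank_fn E (\<lambda>_. 0)"
  by unfold_locales auto

section \<open>Rank functions of independence families\<close>

definition family_rank :: "'a set set \<Rightarrow> 'a set \<Rightarrow> nat" where
  "family_rank F X = Max (card ` {I \<in> F. I \<subseteq> X})"

locale indep_family =
  fixes E :: "'a set" and F :: "'a set set"
  assumes finite_ground: "finite E"
    and empty_mem: "{} \<in> F"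
    and mem_subset: "I \<in> F \<Longrightarrow> I \<subseteq> E"
    and downward_closed: "J \<in> F \<Longrightarrow> I \<subseteq> J \<Longrightarrow> I \<in> F"
    and augment: "I \<in> F \<Longrightarrow> J \<in> F \<Longrightarrow> card I < card J \<Longrightarrow> \<exists>x\<in>J - I. insert x I \<in> F"
begin

lemma finite_mem: "I \<in> F \<Longrightarrow> finite I"
  using finite_subset[OF mem_subset finite_ground] .

lemma finite_mems_within: "finite {I \<in> F. I \<subseteq> X}"
proof (rule finite_subset)
  show "{I \<in> F. I \<subseteq> X} \<subseteq> Pow E"
    using mem_subset by blast
qed (simp add: finite_ground)

lemma card_le_family_rank: "I \<in> F \<Longrightarrow> I \<subseteq> X \<Longrightarrow> card I \<le> family_rank F X"
  unfolding family_rank_def by (rule Max_ge) (auto intro: finite_mems_within)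

lemma family_rank_attained: "\<exists>I\<in>F. I \<subseteq> X \<and> card I = family_rank F X"
proof -
  have "family_rank F X \<in> card ` {I \<in> F. I \<subseteq> X}"
    unfolding family_rank_def using finite_mems_within empty_mem by (intro Max_in) auto
  then show ?thesis
    by auto
qed

lemma extend_to_family_rank:
  assumes "I \<in> F" "I \<subseteq> X"
  shows "\<exists>J\<in>F. I \<subseteq> J \<and> J \<subseteq> X \<and> card J = family_rank F X"
  using assms
proof (induction "family_rank F X - card I" arbitrary: I rule: less_induct)
  case less
  show ?case
  proof (cases "card I = family_rank F X")
    case True
    then show ?thesis
      using less.prems by (intro bexI[of _ I]) auto
  next
    case False
    obtain K where K: "K \<in> F" "K \<subseteq> X" "card K = family_rank F X"
      using family_rank_attained by blast
    have "card I < card K"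
      using card_le_family_rank[OF less.prems] False K by linarith
    then obtain x where x: "x \<in> K" "x \<notin> I" "insert x I \<in> F"
      using augment[OF less.prems(1) K(1)] by blast
    have sub: "insert x I \<subseteq> X"
      using x K less.prems by auto
    have "card (insert x I) = card I + 1"
      using x finite_mem[OF less.prems(1)] by simp
    moreover have "card (insert x I) \<le> family_rank F X"
      using card_le_family_rank[OF x(3) sub] .
    ultimately have "family_rank F X - card (insert x I) < family_rank F X - card I"
      by linarith
    then have "\<exists>J\<in>F. insert x I \<subseteq> J \<and> J \<subseteq> X \<and> card J = family_rank F X"
      using x(3) sub by (rule less.hyps)
    then show ?thesis
      by auto
  qed
qed

lemma mem_iff_family_rank: "I \<in> F \<longleftrightarrow> I \<subseteq> E \<and> family_rank F I = card I"
proof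
  assume I: "I \<in> F"
  obtain J where J: "J \<in> F" "J \<subseteq> I" "card J = family_rank F I"
    using family_rank_attained by blast
  then have "family_rank F I \<le> card I"
    using card_mono[OF finite_mem[OF I] J(2)] by simp
  moreover have "card I \<le> family_rank F I"
    using card_le_family_rank[OF I subset_refl] .
  ultimately show "I \<subseteq> E \<and> family_rank F I = card I"
    using mem_subset[OF I] by simp
next
  assume I: "I \<subseteq> E \<and> family_rank F I = card I"
  obtain J where J: "J \<in> F" "J \<subseteq> I" "card J = family_rank F I"
    using family_rank_attained by blast
  have "finite I"
    using I finite_ground finite_subset by blast
  then have "J = I"
    using card_subset_eq[of I J] J I by simp
  then show "I \<in> F"
    using J by simp
qed

lemma maximals_of_cofinal:
  assumes sub: "U \<subseteq> F" and cofinal: "\<And>I. I \<in> F \<Longrightarrow> \<exists>u\<in>U. I \<subseteq> u"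
  shows "maximals U = {B. B \<subseteq> E \<and> card B = family_rank F B \<and> family_rank F B = family_rank F E}"
proof (intro set_eqI iffI)
  fix B
  assume "B \<in> maximals U"
  then have "B \<in> U" and max: "\<And>Y. Y \<in> U \<Longrightarrow> \<not> B \<subset> Y"
    unfolding maximals_def by auto
  then have B: "B \<in> F"
    using sub by blast
  obtain J where J: "J \<in> F" "B \<subseteq> J" "card J = family_rank F E"
    using extend_to_family_rank[OF B mem_subset[OF B]] by (elim bexE conjE) (rule that)
  obtain u where "u \<in> U" "J \<subseteq> u"
    using cofinal[OF J(1)] by blast
  then have "J = B"
    using max J(2) by blast
  then show "B \<in> {B. B \<subseteq> E \<and> card B = family_rank F B \<and> family_rank F B = family_rank F E}"
    using B J(3) mem_iff_family_rank[of B] by simp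
next
  fix B
  assume "B \<in> {B. B \<subseteq> E \<and> card B = family_rank F B \<and> family_rank F B = family_rank F E}"
  then have B: "B \<in> F" "card B = family_rank F E"
    using mem_iff_family_rank[of B] by simp_all
  have card_le: "card K \<le> family_rank F E" if "K \<in> F" for K
    using card_le_family_rank[OF that mem_subset[OF that]] .
  obtain u where u: "u \<in> U" "B \<subseteq> u"
    using cofinal[OF B(1)] by blast
  then have "u \<in> F"
    using sub by blast
  then have "B = u"
    using card_le B(2) card_seteq[OF finite_mem u(2)] by simp
  moreover have "\<not> B \<subset> Y" if "Y \<in> U" for Y
  proof
    assume "B \<subset> Y"
    moreover have "Y \<in> F"
      using that sub by blast
    ultimately have "card B < card Y"
      using psubset_card_mono[OF finite_mem] by blast
    then show False
      using card_le[OF \<open>Y \<in> F\<close>] B(2) by simp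
  qed
  ultimately show "B \<in> maximals U"
    using u unfolding maximals_def by blast
qed

lemma rank_fn_family_rank: "rank_fn E (family_rank F)"
proof
  show "finite E"
    by (rule finite_ground)
next
  fix X
  assume "X \<subseteq> E"
  obtain J where "J \<in> F" "J \<subseteq> X" "card J = family_rank F X"
    using family_rank_attained by blast
  then show "family_rank F X \<le> card X"
    using \<open>X \<subseteq> E\<close> finite_ground by (metis card_mono finite_subset)
next
  fix X Y
  assume "X \<subseteq> Y" "Y \<subseteq> E"
  obtain J where "J \<in> F" "J \<subseteq> X" "card J = family_rank F X"
    using family_rank_attained by blast
  then show "family_rank F X \<le> family_rank F Y"
    using card_le_family_rank[of J Y] \<open>X \<subseteq> Y\<close> by auto
next
  fix X Y
  obtain I where I: "I \<in> F" "I \<subseteq> X \<inter> Y" "card I = family_rank F (X \<inter> Y)"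
    using family_rank_attained by blast
  then obtain J where J: "J \<in> F" "I \<subseteq> J" "J \<subseteq> X \<union> Y" "card J = family_rank F (X \<union> Y)"
    using extend_to_family_rank[of I "X \<union> Y"] by blast
  have fin_J: "finite J"
    using finite_mem[OF J(1)] .
  have "J \<inter> X \<in> F" "J \<inter> Y \<in> F"
    by (rule downward_closed[OF J(1)]; blast)+
  then have "card (J \<inter> X) \<le> family_rank F X" "card (J \<inter> Y) \<le> family_rank F Y"
    by (auto intro: card_le_family_rank)
  moreover have "card (J \<inter> X) + card (J \<inter> Y) = card J + card (J \<inter> X \<inter> Y)"
  proof -
    have "(J \<inter> X) \<union> (J \<inter> Y) = J" "(J \<inter> X) \<inter> (J \<inter> Y) = J \<inter> X \<inter> Y"
      using J by auto
    then show ?thesis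
      using card_Un_Int[of "J \<inter> X" "J \<inter> Y"] fin_J by simp
  qed
  moreover have "card I \<le> card (J \<inter> X \<inter> Y)"
    using I J fin_J by (intro card_mono) auto
  ultimately show "family_rank F (X \<union> Y) + family_rank F (X \<inter> Y) \<le> family_rank F X + family_rank F Y"
    using I J by linarith
qed

end

section \<open>Matroids and their rank functions\<close>

lemma bases_subset_ground: "is_matroid M \<Longrightarrow> b \<in> bases M \<Longrightarrow> b \<subseteq> ground M"
  unfolding is_matroid_def by auto

lemma finite_bases: "is_matroid M \<Longrightarrow> b \<in> bases M \<Longrightarrow> finite b"
  using bases_subset_ground finite_subset unfolding is_matroid_def by metis

lemma basis_exchange:
  "is_matroid M \<Longrightarrow> b1 \<in> bases M \<Longrightarrow> b2 \<in> bases M \<Longrightarrow> x \<in> b1 - b2 \<Longrightarrow>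
    \<exists>y\<in>b2 - b1. insert y (b1 - {x}) \<in> bases M"
  unfolding is_matroid_def by blast

lemma card_Diff_bases_eq:
  assumes M: "is_matroid M"
  shows "b1 \<in> bases M \<Longrightarrow> b2 \<in> bases M \<Longrightarrow> card (b1 - b2) = n \<Longrightarrow> card (b2 - b1) = n"
proof (induction n arbitrary: b1)
  case 0
  then have "b1 - b2 = {}"
    using finite_bases[OF M] by auto
  then have "b2 - b1 = {}"
    using basis_exchange[OF M 0(2,1)] by blast
  then show ?case
    by (metis card.empty)
next
  case (Suc n)
  then have "b1 - b2 \<noteq> {}"
    by (metis card.empty nat.distinct(1))
  then obtain x where x: "x \<in> b1 - b2"
    by blast
  obtain y where y: "y \<in> b2 - b1" "insert y (b1 - {x}) \<in> bases M"
    using basis_exchange[OF M Suc.prems(1,2) x] by blast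
  have "insert y (b1 - {x}) - b2 = (b1 - b2) - {x}"
    using x y by auto
  then have "card (insert y (b1 - {x}) - b2) = n"
    using Suc.prems x finite_bases[OF M Suc.prems(1)] by simp
  then have "card (b2 - insert y (b1 - {x})) = n"
    using Suc.IH[OF y(2) Suc.prems(2)] by simp
  moreover have "b2 - insert y (b1 - {x}) = (b2 - b1) - {y}"
    using x y by auto
  moreover have "finite (b2 - b1)"
    using finite_bases[OF M Suc.prems(2)] by simp
  ultimately show ?case
    using y(1) card_Suc_Diff1[of "b2 - b1" y] by simp
qed

lemma bases_card_eq:
  assumes M: "is_matroid M" and "b1 \<in> bases M" "b2 \<in> bases M"
  shows "card b1 = card b2"
proof -
  have "card (b2 - b1) = card (b1 - b2)"
    using card_Diff_bases_eq[OF M assms(2,3) refl] .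
  moreover have "finite b1" "finite b2"
    using finite_bases[OF M] assms by auto
  ultimately show ?thesis
    using card_Int_Diff[of b1 b2] card_Int_Diff[of b2 b1] by (simp add: Int_commute)
qed

definition indep :: "'a matroid \<Rightarrow> 'a set \<Rightarrow> bool" where
  "indep M I \<longleftrightarrow> (\<exists>b\<in>bases M. I \<subseteq> b)"

lemma bases_close_to_indeps:
  assumes M: "is_matroid M" and "indep M I1" "indep M I2"
  obtains B1 B2 where "B1 \<in> bases M" "I1 \<subseteq> B1" "B2 \<in> bases M" "I2 \<subseteq> B2" "B2 \<subseteq> I2 \<union> B1"
proof -
  define P where "P = (\<lambda>(B1, B2). B1 \<in> bases M \<and> I1 \<subseteq> B1 \<and> B2 \<in> bases M \<and> I2 \<subseteq> B2)"
  define f where "f = (\<lambda>(B1, B2). card (B2 - (I2 \<union> B1)))"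
  obtain B1 B2 where "P (B1, B2)"
    using assms unfolding indep_def P_def by blast
  then obtain p where "P p" and min: "\<And>q. P q \<Longrightarrow> f p \<le> f q"
    using ex_has_least_nat[of P "(B1, B2)" f] by blast
  then obtain B1 B2 where p: "p = (B1, B2)" and B: "B1 \<in> bases M" "I1 \<subseteq> B1" "B2 \<in> bases M" "I2 \<subseteq> B2"
    unfolding P_def by (cases p) auto
  \<comment> \<open>An element of \<open>B2\<close> outside \<open>I2 \<union> B1\<close> could be exchanged into \<open>B1\<close>, decreasing \<open>f\<close>.\<close>
  have "B2 \<subseteq> I2 \<union> B1"
  proof
    fix x
    assume x: "x \<in> B2"
    show "x \<in> I2 \<union> B1"
    proof (rule ccontr)
      assume x_out: "x \<notin> I2 \<union> B1"
      obtain y where y: "y \<in> B1 - B2" "insert y (B2 - {x}) \<in> bases M"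
        using basis_exchange[OF M B(3,1)] x x_out by blast
      then have P_new: "P (B1, insert y (B2 - {x}))"
        using B x_out unfolding P_def by auto
      have "insert y (B2 - {x}) - (I2 \<union> B1) = (B2 - (I2 \<union> B1)) - {x}"
        using y by auto
      moreover have "x \<in> B2 - (I2 \<union> B1)" "finite (B2 - (I2 \<union> B1))"
        using x x_out finite_bases[OF M B(3)] by auto
      ultimately have "f (B1, insert y (B2 - {x})) < f p"
        unfolding f_def p by (simp only: case_prod_conv) (metis card_Diff1_less)
      then show False
        using min[OF P_new] by linarith
    qed
  qed
  then show ?thesis
    using that B by blast
qed

lemma indep_augment:
  assumes M: "is_matroid M" and I1: "indep M I1" and I2: "indep M I2" and less: "card I1 < card I2"
  shows "\<exists>x\<in>I2 - I1. indep M (insert x I1)"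
proof (rule ccontr)
  assume no_aug: "\<not> (\<exists>x\<in>I2 - I1. indep M (insert x I1))"
  obtain B1 B2 where B: "B1 \<in> bases M" "I1 \<subseteq> B1" "B2 \<in> bases M" "I2 \<subseteq> B2" "B2 \<subseteq> I2 \<union> B1"
    using bases_close_to_indeps[OF M I1 I2] by blast
  \<comment> \<open>Symmetrically, an element of \<open>B1\<close> outside \<open>I1 \<union> B2\<close> would allow augmenting \<open>I1\<close>.\<close>
  have "B1 \<subseteq> I1 \<union> B2"
  proof
    fix z
    assume z: "z \<in> B1"
    show "z \<in> I1 \<union> B2"
    proof (rule ccontr)
      assume z_out: "z \<notin> I1 \<union> B2"
      obtain y where y: "y \<in> B2 - B1" "insert y (B1 - {z}) \<in> bases M"
        using basis_exchange[OF M B(1,3)] z z_out by blast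
      moreover have "insert y I1 \<subseteq> insert y (B1 - {z})"
        using B z_out by blast
      ultimately have "indep M (insert y I1)"
        unfolding indep_def by blast
      moreover have "y \<in> I2 - I1"
        using B y by auto
      ultimately show False
        using no_aug by blast
    qed
  qed
  have "I2 - I1 \<subseteq> B2 - B1"
  proof
    fix y
    assume y: "y \<in> I2 - I1"
    have "y \<notin> B1"
    proof
      assume "y \<in> B1"
      then have "indep M (insert y I1)"
        using B unfolding indep_def by blast
      then show False
        using no_aug y by blast
    qed
    then show "y \<in> B2 - B1"
      using y B by blast
  qed
  have fin: "finite I1" "finite I2"
    using finite_subset[OF B(2) finite_bases[OF M B(1)]] finite_subset[OF B(4) finite_bases[OF M B(3)]] .
  have "card (I2 - I1) \<le> card (B2 - B1)"
    using \<open>I2 - I1 \<subseteq> B2 - B1\<close> finite_bases[OF M B(3)] by (simp add: card_mono)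
  also have "\<dots> = card (B1 - B2)"
    using card_Diff_bases_eq[OF M B(1,3) refl] by simp
  also have "\<dots> \<le> card (I1 - I2)"
    using \<open>B1 \<subseteq> I1 \<union> B2\<close> B fin by (intro card_mono) auto
  finally have "card (I2 - I1) \<le> card (I1 - I2)" .
  moreover have "card I1 = card (I1 \<inter> I2) + card (I1 - I2)" "card I2 = card (I1 \<inter> I2) + card (I2 - I1)"
    using card_Int_Diff[of I1 I2] card_Int_Diff[of I2 I1] fin by (auto simp: Int_commute)
  ultimately show False
    using less by linarith
qed

lemma indep_family_indep:
  assumes M: "is_matroid M"
  shows "indep_family (ground M) {I. indep M I}"
proof
  show "finite (ground M)"
    using M unfolding is_matroid_def by auto
  show "{} \<in> {I. indep M I}"
    using M unfolding is_matroid_def indep_def by auto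
next
  fix I
  assume "I \<in> {I. indep M I}"
  then show "I \<subseteq> ground M"
    using bases_subset_ground[OF M] unfolding indep_def by blast
next
  fix I J
  assume "J \<in> {I. indep M I}" "I \<subseteq> J"
  then show "I \<in> {I. indep M I}"
    unfolding indep_def by blast
next
  fix I J
  assume "I \<in> {I. indep M I}" "J \<in> {I. indep M I}" "card I < card J"
  then show "\<exists>x\<in>J - I. insert x I \<in> {I. indep M I}"
    using indep_augment[OF M] by simp
qed

definition rank_of :: "'a set \<Rightarrow> ('a set \<Rightarrow> nat) \<Rightarrow> 'a matroid \<Rightarrow> bool" where
  "rank_of E r M \<longleftrightarrow> rank_fn E r \<and> ground M = E \<and> bases M = {B. B \<subseteq> E \<and> card B = r B \<and> r B = r E}"

lemma rank_of_rank_fn: "rank_of E r M \<Longrightarrow> rank_fn E r"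
  unfolding rank_of_def by simp

lemma rank_of_bases: "rank_of E r M \<Longrightarrow> bases M = {B. B \<subseteq> E \<and> card B = r B \<and> r B = r E}"
  unfolding rank_of_def by simp

lemma rank_of_matroid:
  assumes M: "is_matroid M"
  shows "rank_of (ground M) (family_rank {I. indep M I}) M"
proof -
  define F where "F = {I. indep M I}"
  define E where "E = ground M"
  interpret indep_family E F
    unfolding F_def E_def by (rule indep_family_indep[OF M])
  have rank_E: "family_rank F E = card b" if b: "b \<in> bases M" for b
  proof -
    obtain I where I: "I \<in> F" "card I = family_rank F E"
      using family_rank_attained[of E] by blast
    then obtain b' where b': "b' \<in> bases M" "I \<subseteq> b'"
      unfolding F_def indep_def by blast
    have "card I \<le> card b"
      using card_mono[OF finite_bases[OF M b'(1)] b'(2)] bases_card_eq[OF M b'(1) b] by simp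
    moreover have "b \<in> F" "b \<subseteq> E"
      using b bases_subset_ground[OF M b] unfolding F_def E_def indep_def by auto
    ultimately show ?thesis
      using card_le_family_rank[of b E] I by linarith
  qed
  have "bases M = {B. B \<subseteq> E \<and> card B = family_rank F B \<and> family_rank F B = family_rank F E}"
  proof (intro set_eqI iffI)
    fix b
    assume b: "b \<in> bases M"
    then have "b \<in> F"
      unfolding F_def indep_def by blast
    then have "b \<subseteq> E" "family_rank F b = card b"
      using mem_iff_family_rank[of b] by simp_all
    then show "b \<in> {B. B \<subseteq> E \<and> card B = family_rank F B \<and> family_rank F B = family_rank F E}"
      using rank_E[OF b] by simp
  next
    fix B
    assume B: "B \<in> {B. B \<subseteq> E \<and> card B = family_rank F B \<and> family_rank F B = family_rank F E}"
    then have "B \<in> F"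
      using mem_iff_family_rank[of B] by simp
    then obtain b where b: "b \<in> bases M" "B \<subseteq> b"
      unfolding F_def indep_def by blast
    moreover have "card B = card b"
      using B rank_E[OF b(1)] by simp
    ultimately have "B = b"
      using card_subset_eq[OF finite_bases[OF M b(1)]] by blast
    then show "B \<in> bases M"
      using b by simp
  qed
  with rank_fn_family_rank show ?thesis
    unfolding rank_of_def F_def E_def by simp
qed

lemma matroid_has_rank:
  assumes "is_matroid M" "ground M = E"
  obtains r where "rank_of E r M"
  using rank_of_matroid[OF assms(1)] assms(2) by auto

lemma rank_of_indep_iff:
  assumes "rank_of E r M"
  shows "indep M I \<longleftrightarrow> I \<subseteq> E \<and> r I = card I"
proof -
  interpret rank_fn E r
    using assms by (rule rank_of_rank_fn)
  note bases = rank_of_bases[OF assms]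
  show ?thesis
  proof
    assume "indep M I"
    then obtain b where "b \<in> bases M" "I \<subseteq> b"
      unfolding indep_def by blast
    then show "I \<subseteq> E \<and> r I = card I"
      using indep_subset[of b I] bases by auto
  next
    assume "I \<subseteq> E \<and> r I = card I"
    then obtain B where "I \<subseteq> B" "B \<subseteq> E" "r B = card B" "card B = r E"
      using extend_basis[of E I] by auto
    then show "indep M I"
      unfolding indep_def bases by auto
  qed
qed

lemma bases_restr_rank_of:
  assumes "rank_of E r M" "T \<subseteq> E"
  shows "bases (restr M T) = {B. B \<subseteq> T \<and> card B = r B \<and> r B = r T}"
proof -
  have "{I. I \<subseteq> T \<and> (\<exists>b\<in>bases M. I \<subseteq> b)} = {I. I \<subseteq> T \<and> I \<subseteq> E \<and> r I = card I}"
    using rank_of_indep_iff[OF assms(1)] assms(2) unfolding indep_def by auto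
  then have "bases (restr M T) = maximals {I. I \<subseteq> T \<and> I \<subseteq> E \<and> r I = card I}"
    by (simp add: bases_def restr_def)
  also have "\<dots> = {B. B \<subseteq> T \<and> card B = r B \<and> r B = r T}"
    using rank_fn.maximal_indeps[OF rank_of_rank_fn[OF assms(1)] assms(2)] .
  finally show ?thesis .
qed

lemma rank_of_restr: "rank_of E r M \<Longrightarrow> T \<subseteq> E \<Longrightarrow> rank_of T r (restr M T)"
  using bases_restr_rank_of[of E r M T] rank_fn.rank_fn_subset[of E r T]
  unfolding rank_of_def by (simp add: ground_def restr_def)

lemma rank_of_unique:
  assumes "rank_of E r1 M1" "rank_of E r2 M2" "\<And>X. X \<subseteq> E \<Longrightarrow> r1 X = r2 X"
  shows "M1 = M2"
proof -
  have "bases M1 = {B. B \<subseteq> E \<and> card B = r1 B \<and> r1 B = r1 E}"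
    using rank_of_bases[OF assms(1)] .
  also have "\<dots> = {B. B \<subseteq> E \<and> card B = r2 B \<and> r2 B = r2 E}"
    using assms(3) by auto
  also have "\<dots> = bases M2"
    using rank_of_bases[OF assms(2)] by simp
  finally show ?thesis
    using assms(1,2) unfolding rank_of_def ground_def bases_def by (simp add: prod_eq_iff)
qed

text \<open>\<open>rank_dominates E r1 r2\<close> says \<open>r2 Y - r2 X \<le> r1 Y - r1 X\<close> for \<open>X \<subseteq> Y\<close>, written without
  subtraction: the matroid of \<open>r2\<close> is a quotient of that of \<open>r1\<close>.\<close>

definition rank_dominates :: "'a set \<Rightarrow> ('a set \<Rightarrow> nat) \<Rightarrow> ('a set \<Rightarrow> nat) \<Rightarrow> bool" where
  "rank_dominates E r1 r2 \<longleftrightarrow> (\<forall>X Y. X \<subseteq> Y \<longrightarrow> Y \<subseteq> E \<longrightarrow> r2 Y + r1 X \<le> r1 Y + r2 X)"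

lemma rank_dominatesD: "rank_dominates E r1 r2 \<Longrightarrow> X \<subseteq> Y \<Longrightarrow> Y \<subseteq> E \<Longrightarrow> r2 Y + r1 X \<le> r1 Y + r2 X"
  unfolding rank_dominates_def by blast

lemma mgeq_imp_rank_dominates:
  assumes M1: "rank_of E r1 M1" and M2: "rank_of E r2 M2" and "mgeq M1 M2"
  shows "rank_dominates E r1 r2"
  unfolding rank_dominates_def
proof (intro allI impI)
  interpret r1: rank_fn E r1
    using M1 by (rule rank_of_rank_fn)
  interpret r2: rank_fn E r2
    using M2 by (rule rank_of_rank_fn)
  fix X Y
  assume XY: "X \<subseteq> Y" "Y \<subseteq> E"
  \<comment> \<open>Extend an \<open>r1\<close>-basis \<open>I\<close> of \<open>X\<close> to an \<open>r1\<close>-basis \<open>J\<close> of \<open>Y\<close>; by \<open>mgeq\<close>, \<open>J\<close> contains an \<open>r2\<close>-basis of \<open>Y\<close>.\<close>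
  have "X \<subseteq> E"
    using XY by blast
  then obtain I where I: "I \<subseteq> X" "r1 I = card I" "card I = r1 X"
    using r1.basis_exists by blast
  have "I \<subseteq> Y"
    using I XY by blast
  then obtain J where J: "I \<subseteq> J" "J \<subseteq> Y" "r1 J = card J" "card J = r1 Y"
    using r1.extend_basis[OF XY(2) _ I(2)] by blast
  have "J \<in> bases (restr M1 Y)"
    using bases_restr_rank_of[OF M1 XY(2)] J by simp
  moreover have "Y \<subseteq> ground M1"
    using M1 XY unfolding rank_of_def by simp
  ultimately obtain B where "B \<in> bases (restr M2 Y)" "B \<subseteq> J"
    using \<open>mgeq M1 M2\<close> unfolding mgeq_def by meson
  then have "r2 Y \<le> r2 J"
    using bases_restr_rank_of[OF M2 XY(2)] r2.rank_mono[of B J] XY J by auto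
  also have "\<dots> \<le> r2 I + card (J - I)"
  proof -
    have "I \<subseteq> E" "J - I \<subseteq> E"
      using J XY by auto
    then show ?thesis
      using r2.rank_Un_le[of I "J - I"] r2.rank_le_card[of "J - I"] J(1) by (simp add: Un_absorb1)
  qed
  also have "\<dots> \<le> r2 X + (r1 Y - r1 X)"
  proof -
    have "finite I"
      using r1.finite_subset_ground \<open>I \<subseteq> Y\<close> XY(2) by blast
    then have "card (J - I) = r1 Y - r1 X"
      using J I by (simp add: card_Diff_subset)
    then show ?thesis
      using r2.rank_mono[OF I(1) \<open>X \<subseteq> E\<close>] by simp
  qed
  finally show "r2 Y + r1 X \<le> r1 Y + r2 X"
    using r1.rank_mono[of X Y] XY by linarith
qed

lemma rank_dominates_imp_mgeq:
  assumes M1: "rank_of E r1 M1" and M2: "rank_of E r2 M2" and dom: "rank_dominates E r1 r2"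
  shows "mgeq M1 M2"
proof -
  interpret r1: rank_fn E r1
    using M1 by (rule rank_of_rank_fn)
  interpret r2: rank_fn E r2
    using M2 by (rule rank_of_rank_fn)
  have ground: "ground M1 = E" "ground M2 = E"
    using M1 M2 unfolding rank_of_def by auto
  have down: "\<exists>b2\<in>bases (restr M2 T). b2 \<subseteq> b1"
    if T: "T \<subseteq> E" and "b1 \<in> bases (restr M1 T)" for T b1
  proof -
    have b1: "b1 \<subseteq> T" "card b1 = r1 b1" "r1 b1 = r1 T"
      using that bases_restr_rank_of[OF M1 T] by auto
    \<comment> \<open>An \<open>r1\<close>-basis of \<open>T\<close> spans \<open>T\<close> also for \<open>r2\<close>, so an \<open>r2\<close>-basis of it is one of \<open>T\<close>.\<close>
    obtain B where B: "B \<subseteq> b1" "r2 B = card B" "card B = r2 b1"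
      using r2.basis_exists[of b1] b1 T by (meson order_trans)
    have "r2 b1 = r2 T"
      using rank_dominatesD[OF dom b1(1) T] r2.rank_mono[of b1 T] b1 T by linarith
    then show ?thesis
      using bases_restr_rank_of[OF M2 T] B b1 by (intro bexI[of _ B]) auto
  qed
  have up: "\<exists>b1\<in>bases (restr M1 T). b2 \<subseteq> b1"
    if T: "T \<subseteq> E" and "b2 \<in> bases (restr M2 T)" for T b2
  proof -
    have b2: "b2 \<subseteq> T" "card b2 = r2 b2" "r2 b2 = r2 T"
      using that bases_restr_rank_of[OF M2 T] by auto
    \<comment> \<open>Taking \<open>X = {}\<close> shows \<open>r2 \<le> r1\<close>, so an \<open>r2\<close>-independent set is \<open>r1\<close>-independent.\<close>
    have "r1 b2 = card b2"
      using rank_dominatesD[OF dom empty_subsetI, of b2] r1.rank_le_card[of b2] b2 T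
      by (simp add: subset_trans)
    then obtain B where "b2 \<subseteq> B" "B \<subseteq> T" "r1 B = card B" "card B = r1 T"
      using r1.extend_basis[of T b2] b2 T by (meson order_trans)
    then show ?thesis
      using bases_restr_rank_of[OF M1 T] by (intro bexI[of _ B]) auto
  qed
  show ?thesis
    unfolding mgeq_def using ground down up by simp
qed

lemma mgeq_iff_rank_dominates:
  "rank_of E r1 M1 \<Longrightarrow> rank_of E r2 M2 \<Longrightarrow> mgeq M1 M2 \<longleftrightarrow> rank_dominates E r1 r2"
  using mgeq_imp_rank_dominates rank_dominates_imp_mgeq by blast

section \<open>Duals, contractions and adding loops\<close>

lemma rank_of_dual:
  assumes M: "rank_of E r M"
  shows "rank_of E (dual_rank E r) (dual M)"
proof -
  interpret rank_fn E r
    using M by (rule rank_of_rank_fn)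
  have ground: "ground M = E"
    using M unfolding rank_of_def by simp
  have "(\<lambda>b. E - b) ` bases M =
      {B. B \<subseteq> E \<and> card B = dual_rank E r B \<and> dual_rank E r B = dual_rank E r E}"
  proof (intro set_eqI iffI)
    fix B
    assume "B \<in> (\<lambda>b. E - b) ` bases M"
    then obtain b where b: "b \<in> bases M" "B = E - b"
      by blast
    then have b': "b \<subseteq> E" "card b = r b" "r b = r E"
      using rank_of_bases[OF M] by auto
    then have "E - B = b" "card B = card E - r E"
      using b card_Diff_subset[OF finite_subset_ground[OF b'(1)] b'(1)] by auto
    then show "B \<in> {B. B \<subseteq> E \<and> card B = dual_rank E r B \<and> dual_rank E r B = dual_rank E r E}"
      using b b' rank_le_card[of E] unfolding dual_rank_def by auto
  next
    fix B
    assume "B \<in> {B. B \<subseteq> E \<and> card B = dual_rank E r B \<and> dual_rank E r B = dual_rank E r E}"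
    then have B: "B \<subseteq> E" "card B = card B + r (E - B) - r E" "card B = card E - r E"
      unfolding dual_rank_def by auto
    have "r (E - B) = r E"
      using B rank_le_card_plus_rank_compl[OF B(1)] rank_mono[of "E - B" E] by linarith
    moreover have "card (E - B) = r E"
      using card_Diff_subset[OF finite_subset_ground[OF B(1)] B(1)] B(3) rank_le_card[of E] by simp
    ultimately have "E - B \<in> bases M"
      using rank_of_bases[OF M] by auto
    moreover have "B = E - (E - B)"
      using B by auto
    ultimately show "B \<in> (\<lambda>b. E - b) ` bases M"
      by blast
  qed
  then show ?thesis
    using rank_fn_dual ground unfolding rank_of_def by (simp add: dual_def ground_def bases_def)
qed

lemma card_split_disjoint:
  assumes "finite A" "A \<subseteq> T \<union> Z" "T \<inter> Z = {}"
  shows "card A = card (A \<inter> T) + card (A \<inter> Z)"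
proof -
  have "A - T = A \<inter> Z"
    using assms(2,3) by blast
  then show ?thesis
    using card_Int_Diff[OF assms(1), of T] by simp
qed

lemma rank_of_contr_lower_bound:
  assumes M: "rank_of E r M" and TZ: "T \<union> Z = E" "T \<inter> Z = {}" and b: "b \<in> bases M"
  shows "r E - r Z \<le> card (b \<inter> T)"
proof -
  interpret rank_fn E r
    using M by (rule rank_of_rank_fn)
  have b': "b \<subseteq> E" "card b = r b" "r b = r E"
    using b rank_of_bases[OF M] by auto
  have "card b = card (b \<inter> T) + card (b \<inter> Z)"
    using card_split_disjoint[of b T Z] finite_subset_ground[OF b'(1)] b'(1) TZ by simp
  moreover have "r (b \<inter> Z) = card (b \<inter> Z)"
    using indep_subset[of b "b \<inter> Z"] b' by simp
  moreover have "r (b \<inter> Z) \<le> r Z"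
    using TZ by (intro rank_mono) auto
  ultimately show ?thesis
    using b' by linarith
qed

lemma rank_of_basis_spanning:
  assumes M: "rank_of E r M" and Z: "Z \<subseteq> E" and b: "b \<in> bases M"
  obtains b' where "b' \<in> bases M" "b' - Z \<subseteq> b" "card (b' \<inter> Z) = r Z"
proof -
  interpret rank_fn E r
    using M by (rule rank_of_rank_fn)
  have b': "b \<subseteq> E" "card b = r b" "r b = r E"
    using b rank_of_bases[OF M] by auto
  \<comment> \<open>Extend \<open>b \<inter> Z\<close> to a basis \<open>BZ\<close> of \<open>Z\<close>, then \<open>BZ\<close> to a basis of \<open>BZ \<union> b\<close>, which spans \<open>E\<close>.\<close>
  have "r (b \<inter> Z) = card (b \<inter> Z)"
    using indep_subset[of b "b \<inter> Z"] b' by simp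
  then obtain BZ where BZ: "b \<inter> Z \<subseteq> BZ" "BZ \<subseteq> Z" "r BZ = card BZ" "card BZ = r Z"
    using extend_basis[OF Z Int_lower2[of b Z]] by blast
  have sub: "BZ \<subseteq> BZ \<union> b" "BZ \<union> b \<subseteq> E"
    using BZ b' Z by auto
  then obtain c where c: "BZ \<subseteq> c" "c \<subseteq> BZ \<union> b" "r c = card c" "card c = r (BZ \<union> b)"
    using extend_basis[OF sub(2) sub(1) BZ(3)] by blast
  have "r b \<le> r (BZ \<union> b)"
    using sub by (intro rank_mono) auto
  moreover have "r (BZ \<union> b) \<le> r E"
    using sub by (intro rank_mono) auto
  ultimately have "c \<in> bases M"
    using rank_of_bases[OF M] b' c sub by auto
  moreover have "c - Z \<subseteq> b"
    using c BZ by auto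
  moreover have "card (c \<inter> Z) = r Z"
  proof -
    have "c \<inter> Z \<subseteq> E" "BZ \<subseteq> c \<inter> Z"
      using c BZ Z by auto
    then have "card BZ \<le> card (c \<inter> Z)"
      using finite_subset_ground by (intro card_mono) auto
    moreover have "r (c \<inter> Z) = card (c \<inter> Z)"
      using indep_subset[of c "c \<inter> Z"] c sub by auto
    moreover have "r (c \<inter> Z) \<le> r Z"
      using Z by (intro rank_mono) auto
    ultimately show ?thesis
      using BZ by linarith
  qed
  ultimately show ?thesis
    by (rule that)
qed

context rank_fn
begin

lemma indep_Un_basis_of_contr:
  assumes B: "B \<subseteq> E" "B \<inter> Z = {}" "card B = contr_rank r Z B"
    and BZ: "BZ \<subseteq> Z" "Z \<subseteq> E" "r BZ = card BZ" "card BZ = r Z"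
  shows "r (B \<union> BZ) = card (B \<union> BZ)"
proof -
  have "B \<union> BZ \<subseteq> E" and eq: "(B \<union> BZ) \<union> Z = B \<union> Z"
    using B BZ by auto
  then have "r (B \<union> Z) + r ((B \<union> BZ) \<inter> Z) \<le> r (B \<union> BZ) + r Z"
    using rank_submod[of "B \<union> BZ" Z] BZ(2) unfolding eq by blast
  moreover have "r BZ \<le> r ((B \<union> BZ) \<inter> Z)"
    using BZ by (intro rank_mono) auto
  moreover have "r Z \<le> r (B \<union> Z)"
    using B BZ by (intro rank_mono) auto
  moreover have "card (B \<union> BZ) = card B + card BZ"
    using B BZ finite_subset_ground by (intro card_Un_disjoint) auto
  moreover have "r (B \<union> BZ) \<le> card (B \<union> BZ)"
    using B BZ by (intro rank_le_card) auto
  ultimately show ?thesis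
    using B(3) BZ unfolding contr_rank_def by linarith
qed

end

lemma minimal_trace_contr_rank:
  assumes M: "rank_of E r M" and TZ: "T \<union> Z = E" "T \<inter> Z = {}"
    and X: "X \<in> minimals ((\<lambda>b. b \<inter> T) ` bases M)"
  shows "X \<subseteq> T \<and> card X = contr_rank r Z X \<and> contr_rank r Z X = contr_rank r Z T"
proof -
  interpret rank_fn E r
    using M by (rule rank_of_rank_fn)
  have Z: "Z \<subseteq> E" and T: "T \<subseteq> E"
    using TZ by auto
  obtain b where b: "b \<in> bases M" "X = b \<inter> T"
    and min: "\<And>Y. Y \<in> (\<lambda>b. b \<inter> T) ` bases M \<Longrightarrow> \<not> Y \<subset> X"
    using X unfolding minimals_def by auto
  obtain c where c: "c \<in> bases M" "c - Z \<subseteq> b" "card (c \<inter> Z) = r Z"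
    using rank_of_basis_spanning[OF M Z b(1)] .
  have c': "c \<subseteq> E" "card c = r c" "r c = r E"
    using c(1) rank_of_bases[OF M] by auto
  have "c \<inter> T \<subseteq> X"
    using b c TZ by blast
  then have cX: "c \<inter> T = X"
    using min[of "c \<inter> T"] c(1) by blast
  then have "card X = r E - r Z"
    using card_split_disjoint[of c T Z] finite_subset_ground c c' TZ by simp
  moreover have "c \<subseteq> X \<union> Z" "X \<union> Z \<subseteq> E"
    using cX c' b T Z TZ by auto
  then have "r (X \<union> Z) = r E"
    using rank_mono[of c "X \<union> Z"] rank_mono[of "X \<union> Z" E] c' by simp
  ultimately show ?thesis
    using b TZ by (simp add: contr_rank_def)
qed

lemma contr_rank_basis_minimal_trace:
  assumes M: "rank_of E r M" and TZ: "T \<union> Z = E" "T \<inter> Z = {}"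
    and B: "B \<subseteq> T" "card B = contr_rank r Z B" "contr_rank r Z B = contr_rank r Z T"
  shows "B \<in> minimals ((\<lambda>b. b \<inter> T) ` bases M)"
proof -
  interpret rank_fn E r
    using M by (rule rank_of_rank_fn)
  have Z: "Z \<subseteq> E" and T: "T \<subseteq> E" and disj: "B \<inter> Z = {}"
    using TZ B by auto
  have card_B: "card B = r E - r Z"
    using B TZ by (simp add: contr_rank_def)
  obtain BZ where BZ: "BZ \<subseteq> Z" "r BZ = card BZ" "card BZ = r Z"
    using basis_exists[OF Z] by blast
  \<comment> \<open>\<open>B\<close> together with a basis of \<open>Z\<close> is a basis of \<open>E\<close> whose trace on \<open>T\<close> is \<open>B\<close>.\<close>
  have "r (B \<union> BZ) = card (B \<union> BZ)"
    using indep_Un_basis_of_contr[OF _ disj B(2) BZ(1) Z BZ(2,3)] B T by blast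
  moreover have "card (B \<union> BZ) = r E"
    using card_B BZ disj rank_mono[OF Z subset_refl] finite_subset_ground[of B] finite_subset_ground[of BZ] B T Z
    by (subst card_Un_disjoint) auto
  ultimately have "B \<union> BZ \<in> bases M"
    using rank_of_bases[OF M] B BZ T Z by auto
  moreover have "(B \<union> BZ) \<inter> T = B"
    using B BZ TZ by blast
  ultimately have img: "B \<in> (\<lambda>b. b \<inter> T) ` bases M"
    by (metis image_eqI)
  have "\<not> Y \<subset> B" if Y: "Y \<in> (\<lambda>b. b \<inter> T) ` bases M" for Y
  proof
    assume "Y \<subset> B"
    then have "card Y < card B"
      using finite_subset_ground B T by (meson psubset_card_mono subset_trans)
    moreover obtain b where "b \<in> bases M" "Y = b \<inter> T"
      using Y by blast
    ultimately show False
      using rank_of_contr_lower_bound[OF M TZ] card_B by fastforce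
  qed
  then show ?thesis
    using img unfolding minimals_def by blast
qed

lemma rank_of_contr:
  assumes M: "rank_of E r M" and TZ: "T \<union> Z = E" "T \<inter> Z = {}"
  shows "rank_of T (contr_rank r Z) (contr M T)"
proof -
  have "E - Z = T" "Z \<subseteq> E"
    using TZ by auto
  then have "rank_fn T (contr_rank r Z)"
    using rank_fn.rank_fn_contr[OF rank_of_rank_fn[OF M]] by metis
  moreover have "minimals ((\<lambda>b. b \<inter> T) ` bases M) =
      {B. B \<subseteq> T \<and> card B = contr_rank r Z B \<and> contr_rank r Z B = contr_rank r Z T}"
    using minimal_trace_contr_rank[OF M TZ] contr_rank_basis_minimal_trace[OF M TZ] by blast
  ultimately show ?thesis
    unfolding rank_of_def by (simp add: contr_def ground_def bases_def)
qed

lemma rank_of_dsum_zero: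
  assumes M: "rank_of E r M" and Q: "finite Q"
  shows "rank_of (E \<union> Q) (\<lambda>X. r (X \<inter> E)) (dsum M (zero_m Q))"
proof -
  interpret rank_fn E r
    using M by (rule rank_of_rank_fn)
  have "bases (dsum M (zero_m Q)) = bases M"
    by (auto simp: bases_def dsum_def zero_m_def)
  also have "\<dots> = {B. B \<subseteq> E \<union> Q \<and> card B = r (B \<inter> E) \<and> r (B \<inter> E) = r ((E \<union> Q) \<inter> E)}"
  proof (intro set_eqI iffI)
    fix B
    assume "B \<in> bases M"
    then have "B \<subseteq> E" "card B = r B" "r B = r E"
      using rank_of_bases[OF M] by auto
    then show "B \<in> {B. B \<subseteq> E \<union> Q \<and> card B = r (B \<inter> E) \<and> r (B \<inter> E) = r ((E \<union> Q) \<inter> E)}"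
      by (auto simp: Int_absorb2)
  next
    fix B
    assume B: "B \<in> {B. B \<subseteq> E \<union> Q \<and> card B = r (B \<inter> E) \<and> r (B \<inter> E) = r ((E \<union> Q) \<inter> E)}"
    have "finite B"
      using B finite_ground Q finite_subset by blast
    moreover have "card B \<le> card (B \<inter> E)"
      using B rank_le_card[of "B \<inter> E"] by simp
    ultimately have "B \<inter> E = B"
      by (metis card_seteq Int_lower1 finite_Int)
    then have "B \<subseteq> E"
      by blast
    then show "B \<in> bases M"
      using B rank_of_bases[OF M] by (simp add: Int_absorb1 Int_absorb2)
  qed
  finally show ?thesis
    using rank_fn_add_loops[OF Q] M unfolding rank_of_def by (simp add: ground_def dsum_def zero_m_def)
qed

lemma rank_dominates_refl: "rank_dominates E r r"
  unfolding rank_dominates_def by simp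

lemma rank_dominates_zero: "rank_fn E r \<Longrightarrow> rank_dominates E r (\<lambda>_. 0)"
  unfolding rank_dominates_def by (simp add: rank_fn.rank_mono)

lemma rank_dominates_add_loops:
  "rank_dominates E r1 r2 \<Longrightarrow> rank_dominates (E \<union> Q) (\<lambda>X. r1 (X \<inter> E)) (\<lambda>X. r2 (X \<inter> E))"
  unfolding rank_dominates_def by (meson Int_lower2 Int_mono order_refl)

lemma rank_dominates_contr:
  assumes r1: "rank_fn E r1" and r2: "rank_fn E r2" and dom: "rank_dominates E r1 r2" and TZ: "T \<union> Z \<subseteq> E"
  shows "rank_dominates T (contr_rank r1 Z) (contr_rank r2 Z)"
  unfolding rank_dominates_def
proof (intro allI impI)
  fix X Y
  assume XY: "X \<subseteq> Y" "Y \<subseteq> T"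
  have "r2 (Y \<union> Z) + r1 (X \<union> Z) \<le> r1 (Y \<union> Z) + r2 (X \<union> Z)"
    using XY TZ by (intro rank_dominatesD[OF dom]) auto
  moreover have "r1 Z \<le> r1 (X \<union> Z)" "r2 Z \<le> r2 (X \<union> Z)"
    using XY TZ by (intro rank_fn.rank_mono[OF r1] rank_fn.rank_mono[OF r2]; auto)+
  moreover have "r1 (X \<union> Z) \<le> r1 (Y \<union> Z)" "r2 (X \<union> Z) \<le> r2 (Y \<union> Z)"
    using XY TZ by (intro rank_fn.rank_mono[OF r1] rank_fn.rank_mono[OF r2]; auto)+
  ultimately show "contr_rank r2 Z Y + contr_rank r1 Z X \<le> contr_rank r1 Z Y + contr_rank r2 Z X"
    unfolding contr_rank_def by linarith
qed

section \<open>Matroid intersection\<close>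

text \<open>\<open>tight_pair E r1 r2 I A\<close>: the common independent set \<open>I\<close> attains the bound
  \<open>r1 A + r2 (E - A)\<close>, so both are optimal in Edmonds' min-max formula.\<close>

definition tight_pair :: "'a set \<Rightarrow> ('a set \<Rightarrow> nat) \<Rightarrow> ('a set \<Rightarrow> nat) \<Rightarrow> 'a set \<Rightarrow> 'a set \<Rightarrow> bool" where
  "tight_pair E r1 r2 I A \<longleftrightarrow>
     I \<subseteq> E \<and> r1 I = card I \<and> r2 I = card I \<and> A \<subseteq> E \<and> card I = r1 A + r2 (E - A)"

lemma common_indep_card_le:
  assumes r1: "rank_fn E r1" and r2: "rank_fn E r2"
    and I: "I \<subseteq> E" "r1 I = card I" "r2 I = card I" and A: "A \<subseteq> E"
  shows "card I \<le> r1 A + r2 (E - A)"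
proof -
  have "card I = card (I \<inter> A) + card (I - A)"
    using card_Int_Diff rank_fn.finite_subset_ground[OF r1 I(1)] by blast
  moreover have "r1 (I \<inter> A) = card (I \<inter> A)" "r2 (I - A) = card (I - A)"
    using rank_fn.indep_subset[OF r1 I(1,2)] rank_fn.indep_subset[OF r2 I(1,3)] by auto
  moreover have "r1 (I \<inter> A) \<le> r1 A" "r2 (I - A) \<le> r2 (E - A)"
    using I A by (intro rank_fn.rank_mono[OF r1] rank_fn.rank_mono[OF r2]; auto)+
  ultimately show ?thesis
    by linarith
qed

lemma tight_pair_loop_left:
  assumes r1: "rank_fn (insert e E) r1" and r2: "rank_fn (insert e E) r2" and e: "e \<notin> E" "r1 {e} = 0"
    and tight: "tight_pair E r1 r2 I A"
  shows "tight_pair (insert e E) r1 r2 I (insert e A)"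
proof -
  have I: "I \<subseteq> E" "r1 I = card I" "r2 I = card I" and A: "A \<subseteq> E" "card I = r1 A + r2 (E - A)"
    using tight unfolding tight_pair_def by auto
  have "r1 (insert e A) \<le> r1 A"
    using rank_fn.rank_Un_le[OF r1, of A "{e}"] A e by auto
  moreover have "insert e E - insert e A = E - A"
    using e by blast
  moreover have "card I \<le> r1 (insert e A) + r2 (insert e E - insert e A)"
    using I A by (intro common_indep_card_le[OF r1 r2]) auto
  ultimately show ?thesis
    using I A unfolding tight_pair_def by auto
qed

lemma tight_pair_loop_right:
  assumes r1: "rank_fn (insert e E) r1" and r2: "rank_fn (insert e E) r2" and e: "e \<notin> E" "r2 {e} = 0"
    and tight: "tight_pair E r1 r2 I A"
  shows "tight_pair (insert e E) r1 r2 I A"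
proof -
  have I: "I \<subseteq> E" "r1 I = card I" "r2 I = card I" and A: "A \<subseteq> E" "card I = r1 A + r2 (E - A)"
    using tight unfolding tight_pair_def by auto
  have "insert e E - A = insert e (E - A)"
    using e A by blast
  then have "r2 (insert e E - A) \<le> r2 (E - A)"
    using rank_fn.rank_Un_le[OF r2, of "E - A" "{e}"] e by auto
  moreover have "card I \<le> r1 A + r2 (insert e E - A)"
    using I A by (intro common_indep_card_le[OF r1 r2]) auto
  ultimately show ?thesis
    using I A unfolding tight_pair_def by auto
qed

lemma uncross_insert:
  assumes r1: "rank_fn (insert e E) r1" and r2: "rank_fn (insert e E) r2"
    and "e \<notin> E" "A \<subseteq> E" "C \<subseteq> E"
  shows "r1 (A \<inter> C) + r2 (insert e E - A \<inter> C) + (r1 (A \<union> insert e C) + r2 (insert e E - (A \<union> insert e C)))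
    \<le> r1 A + r2 (E - A) + (r1 (insert e C) + r2 (insert e (E - C)))"
proof -
  have "r1 (A \<union> insert e C) + r1 (A \<inter> insert e C) \<le> r1 A + r1 (insert e C)"
    using assms by (intro rank_fn.rank_submod[OF r1]) auto
  moreover have "A \<inter> insert e C = A \<inter> C"
    using assms by blast
  moreover have "r2 ((E - A) \<union> insert e (E - C)) + r2 ((E - A) \<inter> insert e (E - C))
      \<le> r2 (E - A) + r2 (insert e (E - C))"
    by (intro rank_fn.rank_submod[OF r2]) auto
  moreover have "(E - A) \<union> insert e (E - C) = insert e E - A \<inter> C"
    "(E - A) \<inter> insert e (E - C) = insert e E - (A \<union> insert e C)"
    using assms by auto
  ultimately show ?thesis
    by simp
qed

lemma tight_pair_nonloop:
  assumes r1: "rank_fn (insert e E) r1" and r2: "rank_fn (insert e E) r2"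
    and e: "e \<notin> E" "r1 {e} = 1" "r2 {e} = 1"
    and del: "tight_pair E r1 r2 I A"
    and con: "tight_pair E (contr_rank r1 {e}) (contr_rank r2 {e}) K C"
  shows "\<exists>J B. tight_pair (insert e E) r1 r2 J B"
proof -
  interpret r1: rank_fn "insert e E" r1
    by (rule r1)
  interpret r2: rank_fn "insert e E" r2
    by (rule r2)
  define f where "f B = r1 B + r2 (insert e E - B)" for B
  have I: "I \<subseteq> E" "r1 I = card I" "r2 I = card I"
    and A: "A \<subseteq> E" "card I = r1 A + r2 (E - A)"
    using del unfolding tight_pair_def by blast+
  have K: "K \<subseteq> E" "contr_rank r1 {e} K = card K" "contr_rank r2 {e} K = card K"
    and C: "C \<subseteq> E" "card K = contr_rank r1 {e} C + contr_rank r2 {e} (E - C)"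
    using con unfolding tight_pair_def by blast+
  have "r1 {e} \<le> r1 (insert e K)" "r2 {e} \<le> r2 (insert e K)"
    "r1 {e} \<le> r1 (insert e C)" "r2 {e} \<le> r2 (insert e (E - C))"
    using K C by (intro r1.rank_mono r2.rank_mono; auto)+
  then have K': "r1 (insert e K) = card K + 1" "r2 (insert e K) = card K + 1"
    and C': "r1 (insert e C) + r2 (insert e (E - C)) = card K + 2"
    using K(2,3) C(2) e unfolding contr_rank_def by simp_all
  \<comment> \<open>\<open>e\<close> extends the common independent set \<open>K\<close> of the contractions to one of \<open>r1\<close> and \<open>r2\<close>.\<close>
  define Ke where "Ke = insert e K"
  have "finite K" "e \<notin> K"
    using K(1) e r1.finite_subset_ground[of K] by auto
  then have Ke: "Ke \<subseteq> insert e E" "r1 Ke = card Ke" "r2 Ke = card Ke" "card Ke = card K + 1"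
    using K(1) K' unfolding Ke_def by auto
  \<comment> \<open>Uncross the tight sets \<open>A\<close> and \<open>insert e C\<close>; one of the two values at \<open>A \<inter> C\<close> and
    \<open>A \<union> insert e C\<close> must drop to the larger of \<open>card I\<close> and \<open>card Ke\<close>.\<close>
  define A1 where "A1 = A \<inter> C"
  define A2 where "A2 = A \<union> insert e C"
  have A12: "A1 \<subseteq> insert e E" "A2 \<subseteq> insert e E"
    using A C unfolding A1_def A2_def by auto
  have sum: "f A1 + f A2 \<le> card I + card Ke + 1"
    using uncross_insert[OF r1 r2 e(1) A(1) C(1)] A(2) C' Ke(4) unfolding f_def A1_def A2_def by simp
  obtain J where J: "J \<subseteq> insert e E" "r1 J = card J" "r2 J = card J"
    and max: "card I \<le> card J" "card Ke \<le> card J"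
  proof (cases "card Ke \<le> card I")
    case True
    then show ?thesis
      using that[of I] I by auto
  next
    case False
    then show ?thesis
      using that[of Ke] Ke by auto
  qed
  have "card J \<le> f A1" "card J \<le> f A2"
    using common_indep_card_le[OF r1 r2 J] A12 unfolding f_def by auto
  then have "f A1 = card J \<or> f A2 = card J"
    using sum max by linarith
  then show ?thesis
    using J A12 unfolding tight_pair_def f_def by metis
qed

lemma matroid_intersection:
  assumes "finite E" "rank_fn E r1" "rank_fn E r2"
  shows "\<exists>I A. tight_pair E r1 r2 I A"
  using assms
proof (induction E arbitrary: r1 r2 rule: finite_induct)
  case empty
  then show ?case
    unfolding tight_pair_def by (auto simp: rank_fn.rank_empty)
next
  case (insert e E)
  have "E \<subseteq> insert e E" "{e} \<subseteq> insert e E" "insert e E - {e} = E"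
    using insert.hyps by auto
  then have "rank_fn E r1" "rank_fn E r2"
    "rank_fn E (contr_rank r1 {e})" "rank_fn E (contr_rank r2 {e})"
    using insert.prems rank_fn.rank_fn_subset rank_fn.rank_fn_contr by metis+
  then obtain Id Ad Ic Ac where del: "tight_pair E r1 r2 Id Ad"
    and con: "tight_pair E (contr_rank r1 {e}) (contr_rank r2 {e}) Ic Ac"
    using insert.IH by meson
  have "r1 {e} \<le> 1" "r2 {e} \<le> 1"
    using rank_fn.rank_le_card[OF insert.prems(1), of "{e}"] rank_fn.rank_le_card[OF insert.prems(2), of "{e}"]
    by auto
  then consider "r1 {e} = 0" | "r2 {e} = 0" | "r1 {e} = 1" "r2 {e} = 1"
    by linarith
  then show ?case
  proof cases
    case 1
    then show ?thesis
      using tight_pair_loop_left[OF insert.prems insert.hyps(2) _ del] by blast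
  next
    case 2
    then show ?thesis
      using tight_pair_loop_right[OF insert.prems insert.hyps(2) _ del] by blast
  next
    case 3
    then show ?thesis
      using tight_pair_nonloop[OF insert.prems insert.hyps(2) _ _ del con] by blast
  qed
qed

section \<open>Matroid union\<close>

definition union_indeps :: "'a set \<Rightarrow> ('a set \<Rightarrow> nat) \<Rightarrow> ('a set \<Rightarrow> nat) \<Rightarrow> 'a set set" where
  "union_indeps E a b = {I1 \<union> I2 | I1 I2. I1 \<subseteq> E \<and> a I1 = card I1 \<and> I2 \<subseteq> E \<and> b I2 = card I2}"

definition indep_partition ::
    "'a set \<Rightarrow> ('a set \<Rightarrow> nat) \<Rightarrow> ('a set \<Rightarrow> nat) \<Rightarrow> 'a set \<Rightarrow> 'a set \<Rightarrow> 'a set \<Rightarrow> bool" where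
  "indep_partition E a b K I1 I2 \<longleftrightarrow>
     I1 \<subseteq> E \<and> a I1 = card I1 \<and> I2 \<subseteq> E \<and> b I2 = card I2 \<and> I1 \<union> I2 = K \<and> I1 \<inter> I2 = {}"

lemma union_indepsI: "I1 \<subseteq> E \<Longrightarrow> a I1 = card I1 \<Longrightarrow> I2 \<subseteq> E \<Longrightarrow> b I2 = card I2 \<Longrightarrow> I1 \<union> I2 \<in> union_indeps E a b"
  unfolding union_indeps_def by blast

lemma union_indeps_commute: "union_indeps E a b = union_indeps E b a"
  unfolding union_indeps_def by (auto simp: Un_commute)

lemma indep_partition_swap: "indep_partition E a b K I1 I2 \<longleftrightarrow> indep_partition E b a K I2 I1"
  unfolding indep_partition_def by auto

lemma union_indeps_partition:
  assumes "rank_fn E b" "K \<in> union_indeps E a b"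
  obtains I1 I2 where "indep_partition E a b K I1 I2"
proof -
  obtain I1 I2 where I: "K = I1 \<union> I2" "I1 \<subseteq> E" "a I1 = card I1" "I2 \<subseteq> E" "b I2 = card I2"
    using assms(2) unfolding union_indeps_def by blast
  have "b (I2 - I1) = card (I2 - I1)"
    using rank_fn.indep_subset[OF assms(1) I(4,5)] by blast
  then have "indep_partition E a b K I1 (I2 - I1)"
    using I unfolding indep_partition_def by auto
  then show ?thesis
    by (rule that)
qed

lemma union_indeps_best_partition:
  assumes "rank_fn E b" "K \<in> union_indeps E a b" and fin: "finite J1" "finite J2"
  obtains I1 I2 where "indep_partition E a b K I1 I2"
    "\<And>I1' I2'. indep_partition E a b K I1' I2' \<Longrightarrow>
       card (I1' \<inter> J1) + card (I2' \<inter> J2) \<le> card (I1 \<inter> J1) + card (I2 \<inter> J2)"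
proof -
  define P where "P = (\<lambda>(I1, I2). indep_partition E a b K I1 I2)"
  define overlap where "overlap = (\<lambda>(I1, I2). card (I1 \<inter> J1) + card (I2 \<inter> J2))"
  obtain I1 I2 where "P (I1, I2)"
    using union_indeps_partition[OF assms(1,2)] unfolding P_def by auto
  moreover have "overlap q < card J1 + card J2 + 1" for q
    using card_mono[OF fin(1), of "fst q \<inter> J1"] card_mono[OF fin(2), of "snd q \<inter> J2"]
    unfolding overlap_def by (auto split: prod.split)
  ultimately obtain p where "P p" "\<And>q. P q \<Longrightarrow> overlap q \<le> overlap p"
    using ex_has_greatest_nat[of P "(I1, I2)" overlap] by blast
  then show ?thesis
    using that unfolding P_def overlap_def by (cases p) auto
qed

lemma union_indeps_augment_core:
  assumes ra: "rank_fn E a" and rb: "rank_fn E b"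
    and part: "indep_partition E a b K I1 I2"
    and J: "J1 \<subseteq> E" "a J1 = card J1" "J2 \<subseteq> E" "b J2 = card J2" "J1 \<inter> J2 = {}"
    and less: "card I1 < card J1"
    and best: "\<And>I1' I2'. indep_partition E a b K I1' I2' \<Longrightarrow>
       card (I1' \<inter> J1) + card (I2' \<inter> J2) \<le> card (I1 \<inter> J1) + card (I2 \<inter> J2)"
  shows "\<exists>x\<in>(J1 \<union> J2) - K. insert x K \<in> union_indeps E a b"
proof -
  have I: "I1 \<subseteq> E" "a I1 = card I1" "I2 \<subseteq> E" "b I2 = card I2" "I1 \<union> I2 = K" "I1 \<inter> I2 = {}"
    using part unfolding indep_partition_def by blast+
  obtain x where x: "x \<in> J1" "x \<notin> I1" "a (insert x I1) = card (insert x I1)"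
    using rank_fn.augment[OF ra I(1) J(1) I(2) J(2) less] by blast
  \<comment> \<open>If \<open>x\<close> were in \<open>I2\<close>, moving it to \<open>I1\<close> would increase the overlap with \<open>(J1, J2)\<close>.\<close>
  have "x \<notin> I2"
  proof
    assume "x \<in> I2"
    have "b (I2 - {x}) = card (I2 - {x})"
      using rank_fn.indep_subset[OF rb I(3,4)] by blast
    then have "indep_partition E a b K (insert x I1) (I2 - {x})"
      using I x J(1) \<open>x \<in> I2\<close> unfolding indep_partition_def by auto
    then have "card (insert x I1 \<inter> J1) + card ((I2 - {x}) \<inter> J2) \<le> card (I1 \<inter> J1) + card (I2 \<inter> J2)"
      by (rule best)
    moreover have "insert x I1 \<inter> J1 = insert x (I1 \<inter> J1)" "(I2 - {x}) \<inter> J2 = I2 \<inter> J2"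
      using x J(5) by auto
    moreover have "finite I1"
      using rank_fn.finite_subset_ground[OF ra I(1)] .
    ultimately show False
      using x by simp
  qed
  then have "insert x K = insert x I1 \<union> I2" "x \<in> (J1 \<union> J2) - K"
    using I x by auto
  moreover have "insert x I1 \<union> I2 \<in> union_indeps E a b"
    using I x J(1) by (intro union_indepsI) auto
  ultimately show ?thesis
    by metis
qed

lemma union_indeps_augment:
  assumes ra: "rank_fn E a" and rb: "rank_fn E b"
    and K: "K \<in> union_indeps E a b" and L: "L \<in> union_indeps E a b" and less: "card K < card L"
  shows "\<exists>x\<in>L - K. insert x K \<in> union_indeps E a b"
proof -
  obtain J1 J2 where J: "indep_partition E a b L J1 J2"
    using union_indeps_partition[OF rb L] .
  then have J': "J1 \<subseteq> E" "a J1 = card J1" "J2 \<subseteq> E" "b J2 = card J2" "J1 \<union> J2 = L" "J1 \<inter> J2 = {}"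
    unfolding indep_partition_def by blast+
  have fin: "finite J1" "finite J2"
    using J' rank_fn.finite_subset_ground[OF ra] by auto
  obtain I1 I2 where I: "indep_partition E a b K I1 I2"
    and best: "\<And>I1' I2'. indep_partition E a b K I1' I2' \<Longrightarrow>
       card (I1' \<inter> J1) + card (I2' \<inter> J2) \<le> card (I1 \<inter> J1) + card (I2 \<inter> J2)"
    using union_indeps_best_partition[OF rb K fin] by blast
  have "card K = card I1 + card I2" "card L = card J1 + card J2"
    using I J' fin rank_fn.finite_subset_ground[OF ra] unfolding indep_partition_def
    by (auto intro!: card_Un_disjoint)
  then consider "card I1 < card J1" | "card I2 < card J2"
    using less by linarith
  then show ?thesis
  proof cases
    case 1
    then show ?thesis
      using union_indeps_augment_core[OF ra rb I J'(1-4,6) _ best] J'(5) by blast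
  next
    case 2
    have "indep_partition E b a K I2 I1"
      using I indep_partition_swap by blast
    moreover have "card (I2' \<inter> J2) + card (I1' \<inter> J1) \<le> card (I2 \<inter> J2) + card (I1 \<inter> J1)"
      if "indep_partition E b a K I2' I1'" for I1' I2'
      using best[of I1' I2'] that unfolding indep_partition_swap[of E a b] by (simp add: add.commute)
    ultimately show ?thesis
      using union_indeps_augment_core[OF rb ra _ J'(3,4,1,2) _ 2] J'(5,6) union_indeps_commute
      by (metis Int_commute Un_commute)
  qed
qed

lemma indep_family_union_indeps:
  assumes ra: "rank_fn E a" and rb: "rank_fn E b"
  shows "indep_family E (union_indeps E a b)"
proof
  show "finite E"
    using rank_fn.finite_ground[OF ra] .
  show "{} \<in> union_indeps E a b"
    using union_indepsI[of "{}" E a "{}" b] rank_fn.rank_empty[OF ra] rank_fn.rank_empty[OF rb] by simp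
next
  fix I
  assume "I \<in> union_indeps E a b"
  then show "I \<subseteq> E"
    unfolding union_indeps_def by blast
next
  fix I J
  assume "J \<in> union_indeps E a b" "I \<subseteq> J"
  then obtain J1 J2 where J: "J = J1 \<union> J2" "J1 \<subseteq> E" "a J1 = card J1" "J2 \<subseteq> E" "b J2 = card J2"
    unfolding union_indeps_def by blast
  have "J1 \<inter> I \<union> J2 \<inter> I \<in> union_indeps E a b"
    using J rank_fn.indep_subset[OF ra J(2,3)] rank_fn.indep_subset[OF rb J(4,5)]
    by (intro union_indepsI) auto
  moreover have "J1 \<inter> I \<union> J2 \<inter> I = I"
    using J \<open>I \<subseteq> J\<close> by blast
  ultimately show "I \<in> union_indeps E a b"
    by simp
next
  fix K L
  assume "K \<in> union_indeps E a b" "L \<in> union_indeps E a b" "card K < card L"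
  then show "\<exists>x\<in>L - K. insert x K \<in> union_indeps E a b"
    by (rule union_indeps_augment[OF ra rb])
qed

definition union_rank :: "'a set \<Rightarrow> ('a set \<Rightarrow> nat) \<Rightarrow> ('a set \<Rightarrow> nat) \<Rightarrow> 'a set \<Rightarrow> nat" where
  "union_rank E a b = family_rank (union_indeps E a b)"

lemma rank_fn_union_rank: "rank_fn E a \<Longrightarrow> rank_fn E b \<Longrightarrow> rank_fn E (union_rank E a b)"
  unfolding union_rank_def by (rule indep_family.rank_fn_family_rank[OF indep_family_union_indeps])

lemma card_le_union_rank:
  "rank_fn E a \<Longrightarrow> rank_fn E b \<Longrightarrow> K \<in> union_indeps E a b \<Longrightarrow> K \<subseteq> Y \<Longrightarrow> card K \<le> union_rank E a b Y"
  unfolding union_rank_def by (rule indep_family.card_le_family_rank[OF indep_family_union_indeps])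

lemma union_rank_attained:
  assumes "rank_fn E a" "rank_fn E b"
  obtains I1 I2 where "I1 \<subseteq> Y" "a I1 = card I1" "I2 \<subseteq> Y" "b I2 = card I2"
    "card (I1 \<union> I2) = union_rank E a b Y"
  using indep_family.family_rank_attained[OF indep_family_union_indeps[OF assms], of Y]
  unfolding union_rank_def union_indeps_def by blast

lemma union_rank_le:
  assumes ra: "rank_fn E a" and rb: "rank_fn E b" and CY: "C \<subseteq> Y" "Y \<subseteq> E"
  shows "union_rank E a b Y \<le> a C + b C + card (Y - C)"
proof -
  obtain I1 I2 where I: "I1 \<subseteq> Y" "a I1 = card I1" "I2 \<subseteq> Y" "b I2 = card I2"
    and card: "card (I1 \<union> I2) = union_rank E a b Y"
    using union_rank_attained[OF ra rb] by blast
  have fin: "finite (I1 \<union> I2)" "finite (Y - C)"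
    using I CY rank_fn.finite_subset_ground[OF ra] by auto
  have "card (I1 \<union> I2) = card ((I1 \<union> I2) \<inter> C) + card ((I1 \<union> I2) - C)"
    using card_Int_Diff[OF fin(1)] by blast
  moreover have "card ((I1 \<union> I2) - C) \<le> card (Y - C)"
    using I fin by (intro card_mono) auto
  moreover have "card ((I1 \<union> I2) \<inter> C) \<le> card (I1 \<inter> C) + card (I2 \<inter> C)"
    by (metis Int_Un_distrib2 card_Un_le)
  moreover have "card (I1 \<inter> C) \<le> a C"
    using rank_fn.indep_subset[OF ra _ I(2), of "I1 \<inter> C"] rank_fn.rank_mono[OF ra, of "I1 \<inter> C" C] I CY
    by auto
  moreover have "card (I2 \<inter> C) \<le> b C"
    using rank_fn.indep_subset[OF rb _ I(4), of "I2 \<inter> C"] rank_fn.rank_mono[OF rb, of "I2 \<inter> C" C] I CY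
    by auto
  ultimately show ?thesis
    using card by linarith
qed

text \<open>The converse bound (Nash-Williams' formula) follows from the intersection theorem applied to
  \<open>b\<close> and the dual of \<open>a\<close> on \<open>X\<close>.\<close>

lemma union_rank_ge:
  assumes ra: "rank_fn E a" and rb: "rank_fn E b" and X: "X \<subseteq> E"
  shows "\<exists>A\<subseteq>X. a A + b A + card (X - A) \<le> union_rank E a b X"
proof -
  interpret a: rank_fn X a
    using rank_fn.rank_fn_subset[OF ra X] .
  have rbX: "rank_fn X b"
    using rank_fn.rank_fn_subset[OF rb X] .
  obtain J A where "tight_pair X b (dual_rank X a) J A"
    using matroid_intersection[OF a.finite_ground rbX a.rank_fn_dual] by blast
  then have J: "J \<subseteq> X" "b J = card J" "dual_rank X a J = card J"
    and A: "A \<subseteq> X" "card J = b A + dual_rank X a (X - A)"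
    unfolding tight_pair_def by blast+
  \<comment> \<open>\<open>J\<close> is co-independent for \<open>a\<close>, so \<open>X - J\<close> contains an \<open>a\<close>-basis of \<open>X\<close>.\<close>
  have "a (X - J) = a X"
    using J(3) a.rank_le_card_plus_rank_compl[OF J(1)] a.rank_mono[of "X - J" X] unfolding dual_rank_def by linarith
  then obtain B where B: "B \<subseteq> X - J" "a B = card B" "card B = a X"
    using a.basis_exists[of "X - J"] by auto
  have "card (B \<union> J) \<le> union_rank E a b X"
    using B J X by (intro card_le_union_rank[OF ra rb] union_indepsI) auto
  moreover have "card (B \<union> J) = card B + card J"
    using B J a.finite_subset_ground by (intro card_Un_disjoint) auto
  moreover have "X - (X - A) = A"
    using A by blast
  then have "dual_rank X a (X - A) = card (X - A) + a A - a X"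
    unfolding dual_rank_def by simp
  moreover have "a X \<le> card (X - A) + a A"
    using a.rank_le_card_plus_rank_compl[of "X - A"] \<open>X - (X - A) = A\<close> by simp
  ultimately show ?thesis
    using A B by (intro exI[of _ A]) auto
qed

lemma union_rank_dominates:
  assumes ra1: "rank_fn E a1" and rb1: "rank_fn E b1" and ra: "rank_fn E a" and rb: "rank_fn E b"
    and dom_a: "rank_dominates E a1 a" and dom_b: "rank_dominates E b1 b"
  shows "rank_dominates E (union_rank E a1 b1) (union_rank E a b)"
  unfolding rank_dominates_def
proof (intro allI impI)
  fix X Y
  assume XY: "X \<subseteq> Y" "Y \<subseteq> E"
  \<comment> \<open>Take minimisers \<open>A\<close> for \<open>X\<close> and \<open>B\<close> for \<open>Y\<close> in Nash-Williams' formula and bound the values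
    at \<open>A \<union> B\<close> (for \<open>Y\<close>) and \<open>A \<inter> B\<close> (for \<open>X\<close>) by submodularity and domination.\<close>
  obtain A where A: "A \<subseteq> X" "a A + b A + card (X - A) \<le> union_rank E a b X"
    using union_rank_ge[OF ra rb] XY by (meson order_trans)
  obtain B where B: "B \<subseteq> Y" "a1 B + b1 B + card (Y - B) \<le> union_rank E a1 b1 Y"
    using union_rank_ge[OF ra1 rb1 XY(2)] by blast
  have AB: "A \<subseteq> E" "B \<subseteq> E" "A \<inter> B \<subseteq> B"
    using A B XY by auto
  have "union_rank E a b Y \<le> a (A \<union> B) + b (A \<union> B) + card (Y - (A \<union> B))"
    using A B XY by (intro union_rank_le[OF ra rb]) auto
  moreover have "union_rank E a1 b1 X \<le> a1 (A \<inter> B) + b1 (A \<inter> B) + card (X - (A \<inter> B))"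
    using A XY by (intro union_rank_le[OF ra1 rb1]) auto
  moreover have "a (A \<union> B) + a (A \<inter> B) \<le> a A + a B" "b (A \<union> B) + b (A \<inter> B) \<le> b A + b B"
    using AB by (intro rank_fn.rank_submod[OF ra] rank_fn.rank_submod[OF rb]; simp)+
  moreover have "a B + a1 (A \<inter> B) \<le> a1 B + a (A \<inter> B)" "b B + b1 (A \<inter> B) \<le> b1 B + b (A \<inter> B)"
    using AB by (intro rank_dominatesD[OF dom_a] rank_dominatesD[OF dom_b]; simp)+
  moreover have "card (X - (A \<inter> B)) = card (X - A) + card (A - B)"
    "card (Y - B) = card (Y - (A \<union> B)) + card (A - B)"
    using A B XY rank_fn.finite_subset_ground[OF ra]
    by (subst card_Un_disjoint[symmetric]; force intro: arg_cong[where f = card])+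
  ultimately show "union_rank E a b Y + union_rank E a1 b1 X \<le> union_rank E a1 b1 Y + union_rank E a b X"
    using A(2) B(2) by linarith
qed

lemma union_rank_no_indep:
  assumes ra: "rank_fn E a" and rb: "rank_fn E b" and X: "X \<subseteq> E"
    and no_indep: "\<And>I. I \<subseteq> X \<Longrightarrow> b I = card I \<Longrightarrow> I = {}"
  shows "union_rank E a b X = a X"
proof (rule antisym)
  obtain I1 I2 where I: "I1 \<subseteq> X" "a I1 = card I1" "I2 \<subseteq> X" "b I2 = card I2"
    and card: "card (I1 \<union> I2) = union_rank E a b X"
    using union_rank_attained[OF ra rb] by blast
  then show "union_rank E a b X \<le> a X"
    using no_indep[OF I(3,4)] rank_fn.rank_mono[OF ra I(1) X] by simp
next
  obtain B where B: "B \<subseteq> X" "a B = card B" "card B = a X"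
    using rank_fn.basis_exists[OF ra X] by blast
  then have "card (B \<union> {}) \<le> union_rank E a b X"
    using X rank_fn.rank_empty[OF rb] by (intro card_le_union_rank[OF ra rb] union_indepsI) auto
  then show "a X \<le> union_rank E a b X"
    using B by simp
qed

lemma rank_dominates_union_rank_left:
  assumes ra: "rank_fn E a" and rb: "rank_fn E b"
  shows "rank_dominates E (union_rank E a b) a"
  unfolding rank_dominates_def
proof (intro allI impI)
  fix X Y
  assume XY: "X \<subseteq> Y" "Y \<subseteq> E"
  have r0: "rank_fn E (\<lambda>_. 0)"
    using rank_fn_zero[OF rank_fn.finite_ground[OF ra]] .
  \<comment> \<open>Compare with the union with the rank-zero matroid, which is the matroid of \<open>a\<close> itself.\<close>
  have a_eq: "union_rank E a (\<lambda>_. 0) Z = a Z" if Z: "Z \<subseteq> E" for Z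
  proof (rule union_rank_no_indep[OF ra r0 Z])
    fix I
    assume "I \<subseteq> Z" "0 = card I"
    then show "I = {}"
      using rank_fn.finite_subset_ground[OF ra] Z by (metis card_0_eq subset_trans)
  qed
  have "rank_dominates E (union_rank E a b) (union_rank E a (\<lambda>_. 0))"
    using union_rank_dominates[OF ra rb ra r0 rank_dominates_refl rank_dominates_zero[OF rb]] .
  then show "a Y + union_rank E a b X \<le> union_rank E a b Y + a X"
    using rank_dominatesD[OF _ XY] a_eq[of X] a_eq[of Y] XY by force
qed

lemma rank_of_munion:
  assumes Ma: "rank_of E a Ma" and Mb: "rank_of E b Mb"
  shows "rank_of E (union_rank E a b) (munion Ma Mb)"
proof -
  have ra: "rank_fn E a" and rb: "rank_fn E b"
    using Ma Mb by (auto intro: rank_of_rank_fn)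
  interpret indep_family E "union_indeps E a b"
    using indep_family_union_indeps[OF ra rb] .
  define U where "U = {b1 \<union> b2 | b1 b2. b1 \<in> bases Ma \<and> b2 \<in> bases Mb}"
  have U_sub: "U \<subseteq> union_indeps E a b"
  proof
    fix u
    assume "u \<in> U"
    then obtain b1 b2 where "u = b1 \<union> b2" "b1 \<in> bases Ma" "b2 \<in> bases Mb"
      unfolding U_def by blast
    then show "u \<in> union_indeps E a b"
      using rank_of_bases[OF Ma] rank_of_bases[OF Mb] union_indepsI[of b1 E a b2 b] by auto
  qed
  have U_sup: "\<exists>u\<in>U. K \<subseteq> u" if K: "K \<in> union_indeps E a b" for K
  proof -
    obtain I1 I2 where I: "K = I1 \<union> I2" "I1 \<subseteq> E" "a I1 = card I1" "I2 \<subseteq> E" "b I2 = card I2"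
      using K unfolding union_indeps_def by blast
    then have "indep Ma I1" "indep Mb I2"
      using rank_of_indep_iff[OF Ma, of I1] rank_of_indep_iff[OF Mb, of I2] by simp_all
    then obtain b1 b2 where b: "b1 \<in> bases Ma" "I1 \<subseteq> b1" "b2 \<in> bases Mb" "I2 \<subseteq> b2"
      unfolding indep_def by blast
    then have "b1 \<union> b2 \<in> U"
      unfolding U_def by blast
    moreover have "K \<subseteq> b1 \<union> b2"
      using I(1) b by blast
    ultimately show ?thesis
      by blast
  qed
  have "maximals U = {B. B \<subseteq> E \<and> card B = union_rank E a b B \<and> union_rank E a b B = union_rank E a b E}"
    unfolding union_rank_def using U_sub U_sup by (rule maximals_of_cofinal)
  moreover have "bases (munion Ma Mb) = maximals U" "ground (munion Ma Mb) = E"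
    using Ma Mb unfolding U_def rank_of_def by (simp_all add: bases_def ground_def munion_def)
  ultimately show ?thesis
    unfolding rank_of_def using rank_fn_union_rank[OF ra rb] by simp
qed

section \<open>Linking matroids\<close>

lemma rank_fn_add_loops_left:
  assumes "rank_of P p MP" "finite S"
  shows "rank_fn (S \<union> P) (\<lambda>X. p (X \<inter> P))"
  using rank_fn.rank_fn_add_loops[OF rank_of_rank_fn[OF assms(1)] assms(2)] by (simp add: Un_commute)

lemma rank_of_link1:
  assumes SP: "S \<inter> P = {}" and S: "finite S" and MSP: "rank_of (S \<union> P) r MSP" and MP: "rank_of P p MP"
  shows "rank_of S (contr_rank (union_rank (S \<union> P) r (\<lambda>X. p (X \<inter> P))) P) (link1 MSP S MP)"
proof -
  have "rank_of (S \<union> P) (\<lambda>X. p (X \<inter> P)) (dsum MP (zero_m S))"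
    using rank_of_dsum_zero[OF MP S] by (simp add: Un_commute)
  then have "rank_of (S \<union> P) (union_rank (S \<union> P) r (\<lambda>X. p (X \<inter> P))) (munion MSP (dsum MP (zero_m S)))"
    by (rule rank_of_munion[OF MSP])
  then show ?thesis
    unfolding link1_def using SP by (intro rank_of_contr) auto
qed

lemma rank_of_link2:
  assumes disj: "S \<inter> P = {}" "S \<inter> Q = {}" "P \<inter> Q = {}" and fin: "finite S" "finite Q"
    and MSP: "rank_of (S \<union> P) r MSP" and MPQ: "rank_of (P \<union> Q) s MPQ"
  shows "rank_of (S \<union> Q)
    (contr_rank (union_rank (S \<union> P \<union> Q) (\<lambda>X. r (X \<inter> (S \<union> P))) (\<lambda>X. s (X \<inter> (P \<union> Q)))) P)
    (link2 MSP S P Q MPQ)"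
proof -
  have "rank_of (S \<union> P \<union> Q) (\<lambda>X. r (X \<inter> (S \<union> P))) (dsum MSP (zero_m Q))"
    using rank_of_dsum_zero[OF MSP fin(2)] .
  moreover have "rank_of (S \<union> P \<union> Q) (\<lambda>X. s (X \<inter> (P \<union> Q))) (dsum MPQ (zero_m S))"
    using rank_of_dsum_zero[OF MPQ fin(1)] by (simp add: Un_commute Un_left_commute)
  ultimately have "rank_of (S \<union> P \<union> Q)
      (union_rank (S \<union> P \<union> Q) (\<lambda>X. r (X \<inter> (S \<union> P))) (\<lambda>X. s (X \<inter> (P \<union> Q))))
      (munion (dsum MSP (zero_m Q)) (dsum MPQ (zero_m S)))"
    by (rule rank_of_munion)
  moreover have "(S \<union> Q) \<union> P = S \<union> P \<union> Q" "(S \<union> Q) \<inter> P = {}"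
    using disj by auto
  ultimately show ?thesis
    unfolding link2_def by (metis rank_of_contr)
qed

lemma mgeq_link2:
  assumes disj: "S \<inter> P = {}" "S \<inter> Q = {}" "P \<inter> Q = {}" and fin: "finite S" "finite Q"
    and M1SP: "rank_of (S \<union> P) r1 M1SP" and MSP: "rank_of (S \<union> P) r MSP"
    and M1PQ: "rank_of (P \<union> Q) s1 M1PQ" and MPQ: "rank_of (P \<union> Q) s MPQ"
    and dom_r: "rank_dominates (S \<union> P) r1 r" and dom_s: "rank_dominates (P \<union> Q) s1 s"
  shows "mgeq (link2 M1SP S P Q M1PQ) (link2 MSP S P Q MPQ)"
proof -
  define G where "G = S \<union> P \<union> Q"
  define a1 a b1 b where "a1 X = r1 (X \<inter> (S \<union> P))" and "a X = r (X \<inter> (S \<union> P))"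
    and "b1 X = s1 (X \<inter> (P \<union> Q))" and "b X = s (X \<inter> (P \<union> Q))" for X
  have ranks: "rank_fn G a1" "rank_fn G a" "rank_fn G b1" "rank_fn G b"
    using rank_fn.rank_fn_add_loops[OF rank_of_rank_fn[OF M1SP] fin(2)]
      rank_fn.rank_fn_add_loops[OF rank_of_rank_fn[OF MSP] fin(2)]
      rank_fn.rank_fn_add_loops[OF rank_of_rank_fn[OF M1PQ] fin(1)]
      rank_fn.rank_fn_add_loops[OF rank_of_rank_fn[OF MPQ] fin(1)]
    unfolding G_def a1_def a_def b1_def b_def by (simp_all add: Un_commute Un_left_commute)
  have "rank_dominates G a1 a" "rank_dominates G b1 b"
    using rank_dominates_add_loops[OF dom_r, of Q] rank_dominates_add_loops[OF dom_s, of S]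
    unfolding G_def a1_def a_def b1_def b_def by (simp_all add: Un_commute Un_left_commute)
  then have "rank_dominates G (union_rank G a1 b1) (union_rank G a b)"
    using union_rank_dominates ranks by blast
  moreover have "(S \<union> Q) \<union> P \<subseteq> G"
    unfolding G_def by blast
  ultimately have "rank_dominates (S \<union> Q) (contr_rank (union_rank G a1 b1) P) (contr_rank (union_rank G a b) P)"
    using rank_dominates_contr[OF rank_fn_union_rank[OF ranks(1,3)] rank_fn_union_rank[OF ranks(2,4)]] by blast
  moreover have "rank_of (S \<union> Q) (contr_rank (union_rank G a1 b1) P) (link2 M1SP S P Q M1PQ)"
    "rank_of (S \<union> Q) (contr_rank (union_rank G a b) P) (link2 MSP S P Q MPQ)"
    unfolding G_def a1_def a_def b1_def b_def
    using rank_of_link2[OF disj fin M1SP M1PQ] rank_of_link2[OF disj fin MSP MPQ] by simp_all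
  ultimately show ?thesis
    using mgeq_iff_rank_dominates by blast
qed

lemma mgeq_restr_link1:
  assumes SP: "S \<inter> P = {}" and S: "finite S" and MSP: "rank_of (S \<union> P) r MSP" and MP: "rank_of P p MP"
  shows "mgeq (restr MSP S) (link1 MSP S MP)"
proof -
  define u where "u = union_rank (S \<union> P) r (\<lambda>X. p (X \<inter> P))"
  have r: "rank_fn (S \<union> P) r" and p: "rank_fn (S \<union> P) (\<lambda>X. p (X \<inter> P))"
    using rank_of_rank_fn[OF MSP] rank_fn_add_loops_left[OF MP S] .
  interpret u: rank_fn "S \<union> P" u
    unfolding u_def using rank_fn_union_rank[OF r p] .
  \<comment> \<open>The second summand of the union has no independent sets inside \<open>S\<close>.\<close>
  have u_S: "u X = r X" if X: "X \<subseteq> S" for X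
    unfolding u_def
  proof (rule union_rank_no_indep[OF r p])
    show "X \<subseteq> S \<union> P"
      using X by blast
  next
    fix I
    assume "I \<subseteq> X" "p (I \<inter> P) = card I"
    moreover have "I \<subseteq> S"
      using \<open>I \<subseteq> X\<close> X by blast
    then have "I \<inter> P = {}" "finite I"
      using SP S finite_subset by auto
    ultimately show "I = {}"
      using rank_fn.rank_empty[OF rank_of_rank_fn[OF MP]] by simp
  qed
  have "rank_dominates S r (contr_rank u P)"
    unfolding rank_dominates_def
  proof (intro allI impI)
    fix X Y
    assume XY: "X \<subseteq> Y" "Y \<subseteq> S"
    have "u (Y \<union> (X \<union> P)) + u (Y \<inter> (X \<union> P)) \<le> u Y + u (X \<union> P)"
      using XY by (intro u.rank_submod) auto
    moreover have "Y \<union> (X \<union> P) = Y \<union> P" "Y \<inter> (X \<union> P) = X"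
      using XY SP by auto
    moreover have "u P \<le> u (X \<union> P)" "u P \<le> u (Y \<union> P)"
      using XY by (intro u.rank_mono; auto)+
    ultimately show "contr_rank u P Y + r X \<le> r Y + contr_rank u P X"
      using u_S XY unfolding contr_rank_def by auto
  qed
  then show ?thesis
    using mgeq_iff_rank_dominates[OF rank_of_restr[OF MSP] rank_of_link1[OF SP S MSP MP]] u_def by blast
qed

lemma mgeq_link1_contr:
  assumes SP: "S \<inter> P = {}" and S: "finite S" and MSP: "rank_of (S \<union> P) r MSP" and MP: "rank_of P p MP"
  shows "mgeq (link1 MSP S MP) (contr MSP S)"
proof -
  define u where "u = union_rank (S \<union> P) r (\<lambda>X. p (X \<inter> P))"
  have r: "rank_fn (S \<union> P) r" and p: "rank_fn (S \<union> P) (\<lambda>X. p (X \<inter> P))"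
    using rank_of_rank_fn[OF MSP] rank_fn_add_loops_left[OF MP S] .
  have "rank_dominates (S \<union> P) u r"
    unfolding u_def by (rule rank_dominates_union_rank_left[OF r p])
  then have "rank_dominates S (contr_rank u P) (contr_rank r P)"
    using rank_dominates_contr[OF rank_fn_union_rank[OF r p] r] unfolding u_def by blast
  moreover have "rank_of S (contr_rank r P) (contr MSP S)"
    using rank_of_contr[OF MSP refl SP] .
  ultimately show ?thesis
    using mgeq_iff_rank_dominates rank_of_link1[OF SP S MSP MP] u_def by blast
qed

context rank_fn
begin

lemma rank_fn_dual_Int: "P \<subseteq> E \<Longrightarrow> rank_fn E (\<lambda>Y. dual_rank E r (Y \<inter> P))"
  using rank_fn.rank_fn_add_loops[OF rank_fn.rank_fn_subset[OF rank_fn_dual, of P] finite_ground]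
  by (simp add: Un_absorb1)

lemma contr_dual_rank:
  assumes SP: "S \<union> P = E" "S \<inter> P = {}" and X: "X \<subseteq> P"
  shows "contr_rank (dual_rank E r) S X + r P = card X + r (P - X)"
proof -
  have fin: "finite X" "finite S"
    using X SP finite_subset_ground by auto
  have "E - (X \<union> S) = P - X" "E - S = P"
    using SP X by auto
  moreover have "card (X \<union> S) = card X + card S"
    using fin X SP by (intro card_Un_disjoint) auto
  moreover have "r E \<le> card (X \<union> S) + r (E - (X \<union> S))" "r E \<le> card S + r (E - S)"
    using SP X by (intro rank_le_card_plus_rank_compl; auto)+
  moreover have "r P \<le> card X + r (P - X)"
    using SP X by (intro rank_le_card_plus_rank_diff) auto
  ultimately show ?thesis
    unfolding contr_rank_def dual_rank_def by simp
qed

lemma rank_fn_contr_dual_Int: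
  assumes "S \<union> P = E" "S \<inter> P = {}"
  shows "rank_fn E (\<lambda>Y. contr_rank (dual_rank E r) S (Y \<inter> P))"
proof -
  have "E - S = P" "P \<union> E = E"
    using assms by auto
  then show ?thesis
    using rank_fn.rank_fn_add_loops[OF rank_fn.rank_fn_contr[OF rank_fn_dual, of S] finite_ground] assms
    by auto
qed

end

lemma union_rank_restr_dual_ge:
  assumes r: "rank_of (S \<union> P) r M" and X: "X \<subseteq> S" and SP: "S \<inter> P = {}"
  shows "r X + card P \<le> union_rank (S \<union> P) r (\<lambda>Y. dual_rank (S \<union> P) r (Y \<inter> P)) (X \<union> P)"
proof -
  interpret rank_fn "S \<union> P" r
    using rank_of_rank_fn[OF r] .
  \<comment> \<open>Extend an \<open>r\<close>-basis \<open>B\<close> of \<open>X\<close> to a basis \<open>b\<close>; then \<open>P - b\<close> is independent in the dual and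
    \<open>(B \<union> (b \<inter> P)) \<union> (P - b) = B \<union> P\<close>.\<close>
  obtain B where B: "B \<subseteq> X" "r B = card B" "card B = r X"
    using basis_exists[of X] X by (meson le_supI1 order_trans)
  then obtain b where b: "b \<subseteq> S \<union> P" "card b = r b" "r b = r (S \<union> P)" "B \<subseteq> b"
    using rank_of_indep_iff[OF r, of B] rank_of_bases[OF r] X unfolding indep_def by auto
  have "r (B \<union> (b \<inter> P)) = card (B \<union> (b \<inter> P))"
    using indep_subset[of b "B \<union> (b \<inter> P)"] b by auto
  moreover have "b \<subseteq> S \<union> P - (P - b)"
    using b by blast
  then have "r (S \<union> P - (P - b)) = r (S \<union> P)"
    using rank_mono[of b "S \<union> P - (P - b)"] rank_mono[of "S \<union> P - (P - b)" "S \<union> P"] b by simp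
  then have "dual_rank (S \<union> P) r ((P - b) \<inter> P) = card (P - b)"
    by (simp add: dual_rank_def Int_absorb2)
  ultimately have "(B \<union> (b \<inter> P)) \<union> (P - b) \<in> union_indeps (S \<union> P) r (\<lambda>Y. dual_rank (S \<union> P) r (Y \<inter> P))"
    using b by (intro union_indepsI) auto
  moreover have "(B \<union> (b \<inter> P)) \<union> (P - b) = B \<union> P"
    by blast
  ultimately have "card (B \<union> P) \<le> union_rank (S \<union> P) r (\<lambda>Y. dual_rank (S \<union> P) r (Y \<inter> P)) (X \<union> P)"
    using B by (metis card_le_union_rank[OF rank_of_rank_fn[OF r] rank_fn_dual_Int] sup_ge2 sup_mono order_refl)
  moreover have "B \<subseteq> S \<union> P" "B \<inter> P = {}"
    using B X SP by auto
  then have "card (B \<union> P) = card B + card P"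
    using finite_subset_ground by (intro card_Un_disjoint) auto
  ultimately show ?thesis
    using B by simp
qed

lemma union_rank_restr_dual:
  assumes SP: "S \<inter> P = {}" and r: "rank_of (S \<union> P) r M" and X: "X \<subseteq> S"
  shows "union_rank (S \<union> P) r (\<lambda>Y. dual_rank (S \<union> P) r (Y \<inter> P)) (X \<union> P) = r X + card P"
proof (rule antisym)
  interpret rank_fn "S \<union> P" r
    using rank_of_rank_fn[OF r] .
  have "union_rank (S \<union> P) r (\<lambda>Y. dual_rank (S \<union> P) r (Y \<inter> P)) (X \<union> P)
      \<le> r X + dual_rank (S \<union> P) r (X \<inter> P) + card ((X \<union> P) - X)"
    using X by (intro union_rank_le[OF rank_of_rank_fn[OF r] rank_fn_dual_Int]) auto
  moreover have "X \<inter> P = {}" "(X \<union> P) - X = P"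
    using X SP by auto
  ultimately show "union_rank (S \<union> P) r (\<lambda>Y. dual_rank (S \<union> P) r (Y \<inter> P)) (X \<union> P) \<le> r X + card P"
    by (simp add: dual_rank_def)
qed (rule union_rank_restr_dual_ge[OF r X SP])

lemma link1_restr_dual:
  assumes SP: "S \<inter> P = {}" and S: "finite S" and r: "rank_of (S \<union> P) r MSP"
  shows "link1 MSP S (restr (dual MSP) P) = restr MSP S"
proof -
  have "rank_of P (dual_rank (S \<union> P) r) (restr (dual MSP) P)"
    using rank_of_restr[OF rank_of_dual[OF r]] by blast
  then have link: "rank_of S (contr_rank (union_rank (S \<union> P) r (\<lambda>Y. dual_rank (S \<union> P) r (Y \<inter> P))) P)
      (link1 MSP S (restr (dual MSP) P))"
    by (rule rank_of_link1[OF SP S r])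
  have "union_rank (S \<union> P) r (\<lambda>Y. dual_rank (S \<union> P) r (Y \<inter> P)) P = card P"
    using union_rank_restr_dual[OF SP r, of "{}"] rank_fn.rank_empty[OF rank_of_rank_fn[OF r]] by simp
  then show ?thesis
    using rank_of_unique[OF link rank_of_restr[OF r]] union_rank_restr_dual[OF SP r]
    by (simp add: contr_rank_def)
qed

lemma union_rank_contr_dual_ge:
  assumes r: "rank_of (S \<union> P) r M" and X: "X \<subseteq> S" and SP: "S \<inter> P = {}"
  shows "r (X \<union> P) + card P
    \<le> union_rank (S \<union> P) r (\<lambda>Y. contr_rank (dual_rank (S \<union> P) r) S (Y \<inter> P)) (X \<union> P) + r P"
proof -
  interpret rank_fn "S \<union> P" r
    using rank_of_rank_fn[OF r] .
  let ?p = "contr_rank (dual_rank (S \<union> P) r) S"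
  have P: "P \<subseteq> S \<union> P" "finite P"
    using finite_subset_ground by auto
  \<comment> \<open>Extend an \<open>r\<close>-basis \<open>BP\<close> of \<open>P\<close> to an \<open>r\<close>-basis \<open>B\<close> of \<open>X \<union> P\<close>; then \<open>P - BP\<close> is
    independent for the contracted dual and \<open>B \<union> (P - BP) = B \<union> P\<close>.\<close>
  obtain BP where BP: "BP \<subseteq> P" "r BP = card BP" "card BP = r P"
    using basis_exists[OF P(1)] by blast
  have XP: "X \<union> P \<subseteq> S \<union> P" "BP \<subseteq> X \<union> P"
    using X BP by auto
  then obtain B where B: "BP \<subseteq> B" "B \<subseteq> X \<union> P" "r B = card B" "card B = r (X \<union> P)"
    using extend_basis[OF XP(1) XP(2) BP(2)] by blast
  have "B \<subseteq> S \<union> P"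
    using B XP by blast
  then have "finite B"
    by (rule finite_subset_ground)
  have "r (B \<inter> P) = card (B \<inter> P)"
    using indep_subset[of B "B \<inter> P"] B XP by auto
  then have "card (B \<inter> P) \<le> card BP"
    using rank_mono[of "B \<inter> P" P] BP P by auto
  moreover have "BP \<subseteq> B \<inter> P" "finite (B \<inter> P)"
    using B BP \<open>finite B\<close> by auto
  ultimately have BP_eq: "B \<inter> P = BP"
    using card_seteq[of "B \<inter> P" BP] by simp
  have "?p (P - BP) + r P = card (P - BP) + r BP"
    using contr_dual_rank[OF refl SP, of "P - BP"] BP by (simp add: Diff_Diff_Int Int_absorb1)
  then have "?p ((P - BP) \<inter> P) = card (P - BP)"
    using BP by (simp add: Int_absorb2)
  then have "B \<union> (P - BP) \<in> union_indeps (S \<union> P) r (\<lambda>Y. ?p (Y \<inter> P))"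
    using B \<open>B \<subseteq> S \<union> P\<close> by (intro union_indepsI) auto
  then have "card (B \<union> (P - BP)) \<le> union_rank (S \<union> P) r (\<lambda>Y. ?p (Y \<inter> P)) (X \<union> P)"
    using B SP by (intro card_le_union_rank[OF rank_of_rank_fn[OF r] rank_fn_contr_dual_Int]) auto
  moreover have "card (B \<union> (P - BP)) = card B + card (P - BP)"
    using \<open>finite B\<close> P BP_eq by (intro card_Un_disjoint) auto
  moreover have "card (P - BP) + card BP = card P"
    using card_Diff_subset[of BP P] card_mono[of P BP] finite_subset[OF BP(1) P(2)] BP(1) P(2) by simp
  ultimately show ?thesis
    using B BP by linarith
qed

lemma union_rank_contr_dual:
  assumes SP: "S \<inter> P = {}" and r: "rank_of (S \<union> P) r M" and X: "X \<subseteq> S"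
  shows "union_rank (S \<union> P) r (\<lambda>Y. contr_rank (dual_rank (S \<union> P) r) S (Y \<inter> P)) (X \<union> P) + r P
    = r (X \<union> P) + card P"
proof (rule antisym)
  interpret rank_fn "S \<union> P" r
    using rank_of_rank_fn[OF r] .
  let ?p = "contr_rank (dual_rank (S \<union> P) r) S"
  have "union_rank (S \<union> P) r (\<lambda>Y. ?p (Y \<inter> P)) (X \<union> P)
      \<le> r (X \<union> P) + ?p ((X \<union> P) \<inter> P) + card ((X \<union> P) - (X \<union> P))"
    using X SP by (intro union_rank_le[OF rank_of_rank_fn[OF r] rank_fn_contr_dual_Int]) auto
  moreover have "?p P + r P = card P"
    using contr_dual_rank[OF refl SP, of P] by simp
  ultimately show "union_rank (S \<union> P) r (\<lambda>Y. ?p (Y \<inter> P)) (X \<union> P) + r P \<le> r (X \<union> P) + card P"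
    by (simp add: Int_absorb1)
qed (rule union_rank_contr_dual_ge[OF r X SP])

lemma link1_contr_dual:
  assumes SP: "S \<inter> P = {}" and S: "finite S" and r: "rank_of (S \<union> P) r MSP"
  shows "link1 MSP S (contr (dual MSP) P) = contr MSP S"
proof -
  have "rank_of P (contr_rank (dual_rank (S \<union> P) r) S) (contr (dual MSP) P)"
    using rank_of_contr[OF rank_of_dual[OF r], of P S] SP by (simp add: Un_commute Int_commute)
  then have link: "rank_of S (contr_rank (union_rank (S \<union> P) r
      (\<lambda>Y. contr_rank (dual_rank (S \<union> P) r) S (Y \<inter> P))) P) (link1 MSP S (contr (dual MSP) P))"
    by (rule rank_of_link1[OF SP S r])
  have "union_rank (S \<union> P) r (\<lambda>Y. contr_rank (dual_rank (S \<union> P) r) S (Y \<inter> P)) P = card P"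
    using union_rank_contr_dual[OF SP r, of "{}"] by simp
  moreover have "r P \<le> r (X \<union> P)" if "X \<subseteq> S" for X
    using that by (intro rank_fn.rank_mono[OF rank_of_rank_fn[OF r]]) auto
  ultimately have "contr_rank (union_rank (S \<union> P) r
      (\<lambda>Y. contr_rank (dual_rank (S \<union> P) r) S (Y \<inter> P))) P X = contr_rank r P X" if "X \<subseteq> S" for X
    using union_rank_contr_dual[OF SP r that] that unfolding contr_rank_def[of _ P] by fastforce
  then show ?thesis
    by (rule rank_of_unique[OF link rank_of_contr[OF r refl SP]])
qed

theorem theorem7:
  fixes S P Q :: "'a set" and MSP MP MPQ :: "'a matroid"
  assumes "finite S" "finite P" "finite Q"
    and "S \<inter> P = {}" "S \<inter> Q = {}" "P \<inter> Q = {}"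
    and "is_matroid MSP" "ground MSP = S \<union> P"
    and "is_matroid MP" "ground MP = P"
    and "is_matroid MPQ" "ground MPQ = P \<union> Q"
  shows "(\<forall>M1SP M1PQ. is_matroid M1SP \<and> ground M1SP = S \<union> P \<and>
             is_matroid M1PQ \<and> ground M1PQ = P \<union> Q \<and>
             mgeq M1SP MSP \<and> mgeq M1PQ MPQ \<longrightarrow>
             mgeq (link2 M1SP S P Q M1PQ) (link2 MSP S P Q MPQ))
       \<and> (mgeq (restr MSP S) (link1 MSP S MP) \<and> mgeq (link1 MSP S MP) (contr MSP S))
       \<and> (MP = restr (dual MSP) P \<longrightarrow> restr MSP S = link1 MSP S MP)
       \<and> (MP = contr (dual MSP) P \<longrightarrow> contr MSP S = link1 MSP S MP)"
proof -
  obtain r where r: "rank_of (S \<union> P) r MSP"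
    using matroid_has_rank[OF assms(7,8)] .
  obtain p where p: "rank_of P p MP"
    using matroid_has_rank[OF assms(9,10)] .
  obtain s where s: "rank_of (P \<union> Q) s MPQ"
    using matroid_has_rank[OF assms(11,12)] .
  have "mgeq (link2 M1SP S P Q M1PQ) (link2 MSP S P Q MPQ)"
    if M1: "is_matroid M1SP" "ground M1SP = S \<union> P" "is_matroid M1PQ" "ground M1PQ = P \<union> Q"
      and ge: "mgeq M1SP MSP" "mgeq M1PQ MPQ" for M1SP M1PQ
  proof -
    obtain r1 where r1: "rank_of (S \<union> P) r1 M1SP"
      using matroid_has_rank[OF M1(1,2)] .
    obtain s1 where s1: "rank_of (P \<union> Q) s1 M1PQ"
      using matroid_has_rank[OF M1(3,4)] .
    show ?thesis
      using mgeq_link2[OF assms(4-6,1,3) r1 r s1 s] mgeq_iff_rank_dominates[OF r1 r]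
        mgeq_iff_rank_dominates[OF s1 s] ge by blast
  qed
  then show ?thesis
    using mgeq_restr_link1[OF assms(4,1) r p] mgeq_link1_contr[OF assms(4,1) r p]
      link1_restr_dual[OF assms(4,1) r] link1_contr_dual[OF assms(4,1) r] by auto
qed

end
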